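(* Let $V$ be the $\mathbb Z$-representation of the Kronecker quiver $\mathsf K_2$ (two vertices, two parallel arrows) in which both vertices are represented by $\mathbb Z^2$ and the arrows by $f_1=\mathrm{id}$ and $f_2=\begin{pmatrix}0&1\\-1&0\end{pmatrix}$. Let $\mathfrak o$ be a compact discrete valuation ring of odd residue field cardinality $q$ and $t=q^{-s}$. Then $$\zeta_{V(\mathfrak o)}(s)=\begin{cases}\dfrac{(1+t^2)(1-t^3)}{(1-t)(1-t^2)(1-t^4)(1-qt)(1-qt^3)},&\text{if } q\equiv1\bmod 4,\\[2ex]\dfrac{1+t^3}{(1-t)(1-t^4)(1-qt)(1-qt^3)},&\text{if } q\equiv 3\bmod 4.\end{cases}$$
   Context: $V(\mathfrak o)$ is obtained by tensoring with $\mathfrak o$. A subrepresentation is a pair of submodules $\Lambda_1,\Lambda_2\le\mathfrak o^2$ (at tail and head) with $f_i(\Lambda_1)\subseteq\Lambda_2$ for $i=1,2$, and $\zeta_{V(\mathfrak o)}(s)=\sum|\mathfrak o^2:\Lambda_1|^{-s}|\mathfrak o^2:\Lambda_2|^{-s}$ over such pairs of finite index. *)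

theory Defs
  imports "HOL-Analysis.Analysis"
begin

text \<open>The ring o is modelled as a type 'a of class idom.
  A discrete valuation ring with uniformizer pi: pi is a nonzero non-unit and every
  nonzero element is a unit times a power of pi.\<close>
definition dvr_uniformizer :: "'a::idom \<Rightarrow> bool" where
  "dvr_uniformizer p \<longleftrightarrow> p \<noteq> 0 \<and> \<not> p dvd 1 \<and>
     (\<forall>x. x \<noteq> 0 \<longrightarrow> (\<exists>u n. u dvd 1 \<and> x = u * p ^ n))"

text \<open>Residue field o/m, where m is the maximal ideal of non-units.\<close>
definition residue_field :: "'a::idom itself \<Rightarrow> 'a set set" where
  "residue_field _ = (UNIV::'a set) // {(x, y). \<not> (x - y) dvd 1}"

text \<open>Compact DVR: a DVR with finite residue field which is complete
  with respect to the pi-adic topology.\<close>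
definition compact_dvr :: "'a::idom itself \<Rightarrow> bool" where
  "compact_dvr T \<longleftrightarrow> (\<exists>p::'a. dvr_uniformizer p \<and>
      (\<forall>x::nat \<Rightarrow> 'a. (\<forall>n. p ^ n dvd (x (Suc n) - x n)) \<longrightarrow>
          (\<exists>y. \<forall>n. p ^ n dvd (y - x n)))) \<and>
     finite (residue_field T)"

definition residue_card :: "'a::idom itself \<Rightarrow> nat" where
  "residue_card T = card (residue_field T)"

definition submod2 :: "('a::comm_ring_1 \<times> 'a) set \<Rightarrow> bool" where
  "submod2 L \<longleftrightarrow> (0, 0) \<in> L \<and>
     (\<forall>x\<in>L. \<forall>y\<in>L. (fst x + fst y, snd x + snd y) \<in> L) \<and>
     (\<forall>c. \<forall>x\<in>L. (c * fst x, c * snd x) \<in> L)"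

definition quot2 :: "('a::comm_ring_1 \<times> 'a) set \<Rightarrow> ('a \<times> 'a) set set" where
  "quot2 L = (UNIV::('a \<times> 'a) set) // {(x, y). (fst x - fst y, snd x - snd y) \<in> L}"

definition index2 :: "('a::comm_ring_1 \<times> 'a) set \<Rightarrow> nat" where
  "index2 L = card (quot2 L)"

definition kron_f1 :: "'a::comm_ring_1 \<times> 'a \<Rightarrow> 'a \<times> 'a" where
  "kron_f1 v = v"

definition kron_f2 :: "'a::comm_ring_1 \<times> 'a \<Rightarrow> 'a \<times> 'a" where
  "kron_f2 v = (snd v, - fst v)"

text \<open>Finite-index subrepresentations (L1 at the tail, L2 at the head).\<close>
definition kron_subreps :: "'a::comm_ring_1 itself \<Rightarrow> (('a \<times> 'a) set \<times> ('a \<times> 'a) set) set" where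
  "kron_subreps _ = {(L1, L2). submod2 L1 \<and> submod2 L2 \<and>
      finite (quot2 L1) \<and> finite (quot2 L2) \<and>
      kron_f1 ` L1 \<subseteq> L2 \<and> kron_f2 ` L1 \<subseteq> L2}"

end

theory Submission
  imports Defs "HOL-Algebra.Multiplicative_Group" "HOL-Algebra.QuotRing"
begin

(* Every finite-index submodule of o^2 is the column span of a unique Hermite normal form
   [[pi^a, 0], [pi^b u, pi^(b+l)]], with u a unit taken modulo pi^l (or l = 0); its index is
   q^(a+b+l).  If q = 1 mod 4, Hensel's lemma gives i in o with i^2 = -1, and a base change
   turns f2 into diag(i, -i); then (L1, L2) is a subrepresentation iff L2 contains
   pi^a1 o x pi^b1 o.  If q = 3 mod 4, x^2 + y^2 is a unit for every primitive vector (x, y),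
   so L1 + f2 L1 = pi^m o^2 with m = min(a1, b1), and the condition is pi^m o^2 <= L2.
   In both cases the parameters of L1 range freely above bounds determined by L2, so the
   zeta function factors into geometric series and the series (1 - z)/(1 - q z) counting
   the units modulo powers of pi. *)

lemma dvd_unit_mult_iff:
  fixes u :: "'a::comm_monoid_mult" assumes "u dvd 1" shows "c dvd u * x \<longleftrightarrow> c dvd x"
proof
  assume "c dvd u * x"
  obtain w where "1 = u * w" using assms by (elim dvdE)
  moreover have "w * (u * x) = (u * w) * x" by (simp add: ac_simps)
  ultimately have "x = w * (u * x)" by simp
  with \<open>c dvd u * x\<close> show "c dvd x" by (metis dvd_mult)
qed simp

lemma dvd_diff_swap: "(c::'a::comm_ring_1) dvd x - y \<longleftrightarrow> c dvd y - x"
  by (metis minus_diff_eq dvd_minus_iff)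

section \<open>Compact discrete valuation rings\<close>

locale cdvr =
  fixes \<pi> :: "'a::idom" and q :: nat
  assumes uniformizer: "dvr_uniformizer \<pi>"
    and complete: "\<And>x. (\<And>n. \<pi> ^ n dvd x (Suc n) - x n) \<Longrightarrow> \<exists>y. \<forall>n. \<pi> ^ n dvd y - x n"
    and finite_residue_field: "finite (residue_field TYPE('a))"
    and residue_card: "residue_card TYPE('a) = q"
begin

lemma uniformizer_nonzero [simp]: "\<pi> \<noteq> 0"
  using uniformizer by (simp add: dvr_uniformizer_def)

lemma uniformizer_not_unit: "\<not> \<pi> dvd 1"
  using uniformizer by (simp add: dvr_uniformizer_def)

lemma unit_mult_power_factorization:
  assumes "x \<noteq> 0" obtains u n where "u dvd 1" "x = u * \<pi> ^ n"
  using uniformizer assms by (auto simp: dvr_uniformizer_def)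

lemma unit_iff_not_dvd: "x dvd 1 \<longleftrightarrow> \<not> \<pi> dvd x"
proof
  assume "x dvd 1" then show "\<not> \<pi> dvd x"
    using uniformizer_not_unit dvd_trans by blast
next
  assume x: "\<not> \<pi> dvd x"
  then have "x \<noteq> 0" by auto
  then obtain u n where "u dvd 1" "x = u * \<pi> ^ n"
    by (rule unit_mult_power_factorization)
  with x show "x dvd 1" by (cases n) auto
qed

lemma prime_elem_uniformizer: "prime_elem \<pi>"
proof (rule prime_elemI)
  fix a b assume "\<pi> dvd a * b"
  moreover have "\<not> \<pi> dvd a * b" if "a dvd 1" "b dvd 1"
    using mult_dvd_mono[OF that] unit_iff_not_dvd by simp
  ultimately show "\<pi> dvd a \<or> \<pi> dvd b"
    using unit_iff_not_dvd by blast
qed (simp_all add: uniformizer_not_unit)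

lemma power_dvd_power_iff [simp]: "\<pi> ^ m dvd \<pi> ^ n \<longleftrightarrow> m \<le> n"
proof
  assume dvd: "\<pi> ^ m dvd \<pi> ^ n"
  show "m \<le> n"
  proof (rule ccontr)
    assume "\<not> m \<le> n"
    then have "\<pi> ^ n * \<pi> ^ (m - n) dvd \<pi> ^ n * 1"
      using dvd by (simp flip: power_add)
    then have "\<pi> ^ (m - n) dvd 1"
      by (subst (asm) dvd_mult_cancel_left) simp
    moreover have "\<pi> dvd \<pi> ^ (m - n)"
      using \<open>\<not> m \<le> n\<close> by (simp add: dvd_power)
    ultimately show False
      using uniformizer_not_unit dvd_trans by blast
  qed
qed (rule le_imp_power_dvd)

lemma power_dvd_unit_mult_power_iff: "u dvd 1 \<Longrightarrow> \<pi> ^ m dvd u * \<pi> ^ n \<longleftrightarrow> m \<le> n"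
  by (simp add: dvd_unit_mult_iff)

lemma eq_0_if_dvd_all_powers:
  assumes "\<And>n. \<pi> ^ n dvd x" shows "x = 0"
proof (rule ccontr)
  assume "x \<noteq> 0"
  then obtain u n where u: "u dvd 1" "x = u * \<pi> ^ n"
    by (rule unit_mult_power_factorization)
  with assms[of "Suc n"] have "\<pi> ^ Suc n dvd u * \<pi> ^ n" by simp
  with u(1) show False by (simp only: power_dvd_unit_mult_power_iff)
qed

lemma one_minus_power_unit: assumes "0 < m" shows "(1 - \<pi> ^ m) dvd 1"
proof -
  have "\<pi> dvd \<pi> ^ m" using assms by (simp add: dvd_power)
  then have "\<not> \<pi> dvd 1 - \<pi> ^ m"
    using uniformizer_not_unit by (metis diff_add_cancel dvd_add)
  then show ?thesis using unit_iff_not_dvd by blast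
qed

definition residue_rel :: "('a \<times> 'a) set" where
  "residue_rel = {(x, y). \<pi> dvd x - y}"

lemma residue_field_eq: "residue_field TYPE('a) = UNIV // residue_rel"
proof -
  have "{(x, y). \<not> (x - y) dvd (1::'a)} = residue_rel"
    unfolding residue_rel_def using unit_iff_not_dvd by auto
  then show ?thesis unfolding residue_field_def by simp
qed

lemma equiv_residue_rel: "equiv UNIV residue_rel"
proof (rule equivI)
  show "sym residue_rel"
    unfolding residue_rel_def sym_def using dvd_diff_swap by blast
  show "trans residue_rel"
    unfolding residue_rel_def trans_def by (metis (mono_tags) case_prodD case_prodI
        diff_add_cancel dvd_add mem_Collect_eq add_diff_eq)
qed (auto intro: reflI simp: residue_rel_def)

definition residue_rep :: "'a set \<Rightarrow> 'a" where
  "residue_rep C = (if 0 \<in> C then 0 else (SOME x. x \<in> C))"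

definition digits :: "'a set" where
  "digits = residue_rep ` residue_field TYPE('a)"

lemma residue_rep_mem: "C \<in> residue_field TYPE('a) \<Longrightarrow> residue_rep C \<in> C"
  unfolding residue_rep_def residue_field_eq
  by (metis equiv_residue_rel in_quotient_imp_non_empty someI_ex ex_in_conv)

lemma zero_in_digits: "0 \<in> digits"
proof -
  have "residue_rel `` {0} \<in> residue_field TYPE('a)"
    unfolding residue_field_eq by (rule quotientI) simp
  moreover have "0 \<in> residue_rel `` {0}" by (simp add: residue_rel_def)
  ultimately show ?thesis unfolding digits_def residue_rep_def by force
qed

lemma digit_exists: "\<exists>d\<in>digits. \<pi> dvd x - d"
proof -
  have C: "residue_rel `` {x} \<in> residue_field TYPE('a)"
    unfolding residue_field_eq by (rule quotientI) simp
  then have "residue_rep (residue_rel `` {x}) \<in> residue_rel `` {x}"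
    by (rule residue_rep_mem)
  then show ?thesis using C unfolding digits_def residue_rel_def by auto
qed

lemma digit_unique:
  assumes "d \<in> digits" "d' \<in> digits" "\<pi> dvd d - d'" shows "d = d'"
proof -
  obtain C D where C: "C \<in> residue_field TYPE('a)" "d = residue_rep C"
    and D: "D \<in> residue_field TYPE('a)" "d' = residue_rep D"
    using assms(1,2) unfolding digits_def by blast
  have "(d, d') \<in> residue_rel" using assms(3) by (simp add: residue_rel_def)
  with C D have "C = D"
    using residue_rep_mem quotient_eq_iff[OF equiv_residue_rel] by (metis residue_field_eq)
  with C D show ?thesis by simp
qed

lemma digit_eq_0_iff_dvd: "d \<in> digits \<Longrightarrow> d = 0 \<longleftrightarrow> \<pi> dvd d"
  using digit_unique[OF _ zero_in_digits] by auto

lemma finite_digits: "finite digits"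
  unfolding digits_def using finite_residue_field by simp

lemma card_digits: "card digits = q"
proof -
  have "inj_on residue_rep (residue_field TYPE('a))"
  proof (rule inj_onI)
    fix C D assume "C \<in> residue_field TYPE('a)" "D \<in> residue_field TYPE('a)"
      and "residue_rep C = residue_rep D"
    then show "C = D"
      using residue_rep_mem quotient_eq_iff[OF equiv_residue_rel]
      by (metis residue_field_eq dvd_0_right diff_self residue_rel_def case_prodI mem_Collect_eq)
  qed
  then show ?thesis
    unfolding digits_def residue_card[symmetric] residue_card_def by (rule card_image)
qed

primrec expansion :: "'a list \<Rightarrow> 'a" where
  "expansion [] = 0"
| "expansion (d # ds) = d + \<pi> * expansion ds"

abbreviation digit_lists :: "nat \<Rightarrow> 'a list set" where
  "digit_lists n \<equiv> {ds. set ds \<subseteq> digits \<and> length ds = n}"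

lemma card_digit_lists: "card (digit_lists n) = q ^ n"
  using card_lists_length_eq[OF finite_digits] card_digits by simp

lemma finite_digit_lists: "finite (digit_lists n)"
  using finite_lists_length_eq[OF finite_digits] .

lemma expansion_exists: "\<exists>ds \<in> digit_lists n. \<pi> ^ n dvd x - expansion ds"
proof (induction n arbitrary: x)
  case 0 then show ?case by simp
next
  case (Suc n)
  obtain d where d: "d \<in> digits" "\<pi> dvd x - d" using digit_exists by blast
  then obtain x' where x': "x - d = \<pi> * x'" by (elim dvdE)
  obtain ds where ds: "ds \<in> digit_lists n" "\<pi> ^ n dvd x' - expansion ds" using Suc by blast
  have "x - expansion (d # ds) = \<pi> * (x' - expansion ds)" using x' by (simp add: algebra_simps)
  then have "\<pi> ^ Suc n dvd x - expansion (d # ds)" using ds(2) by (simp add: mult_dvd_mono)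
  then show ?case using d ds by (intro bexI[of _ "d # ds"]) auto
qed

lemma expansion_unique:
  "ds \<in> digit_lists n \<Longrightarrow> es \<in> digit_lists n \<Longrightarrow> \<pi> ^ n dvd expansion ds - expansion es \<Longrightarrow> ds = es"
proof (induction ds arbitrary: es n)
  case Nil then show ?case by simp
next
  case (Cons d ds)
  then obtain e es' n' where es: "es = e # es'" and n: "n = Suc n'" by (cases es) auto
  have eq: "expansion (d # ds) - expansion es = (d - e) + \<pi> * (expansion ds - expansion es')"
    using es by (simp add: algebra_simps)
  have "\<pi> dvd expansion (d # ds) - expansion es"
    using Cons.prems(3) n by (metis dvd_power dvd_trans zero_less_Suc)
  then have "\<pi> dvd d - e" using eq by (metis dvd_add_left_iff dvd_triv_left)
  then have de: "d = e" using Cons.prems es digit_unique by auto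
  have "\<pi> * \<pi> ^ n' dvd \<pi> * (expansion ds - expansion es')" using Cons.prems(3) eq de n by simp
  then have "\<pi> ^ n' dvd expansion ds - expansion es'" by simp
  then have "ds = es'" using Cons es n by auto
  with de es show ?case by simp
qed

definition unit_digit_lists :: "'a list set" where
  "unit_digit_lists = {us. set us \<subseteq> digits \<and> (us = [] \<or> hd us \<noteq> 0)}"

lemma expansion_unit: "us \<in> unit_digit_lists \<Longrightarrow> us \<noteq> [] \<Longrightarrow> expansion us dvd 1"
proof (cases us)
  case (Cons d ds)
  assume "us \<in> unit_digit_lists"
  then have "\<not> \<pi> dvd d" using Cons digit_eq_0_iff_dvd by (auto simp: unit_digit_lists_def)
  then have "\<not> \<pi> dvd d + \<pi> * expansion ds" by (metis dvd_add_left_iff dvd_triv_left)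
  then show ?thesis using Cons unit_iff_not_dvd by simp
qed simp

lemma card_unit_digit_lists:
  "card {us \<in> unit_digit_lists. length us = n} = (if n = 0 then 1 else (q - 1) * q ^ (n - 1))"
proof (cases n)
  case 0
  then have "{us \<in> unit_digit_lists. length us = n} = {[]}" by (auto simp: unit_digit_lists_def)
  then show ?thesis using 0 by simp
next
  case (Suc m)
  have "{us \<in> unit_digit_lists. length us = n} = (\<lambda>(d, ds). d # ds) ` ((digits - {0}) \<times> digit_lists m)"
    using Suc by (auto simp: unit_digit_lists_def image_iff length_Suc_conv)
  moreover have "inj_on (\<lambda>(d, ds). d # ds) ((digits - {0}) \<times> digit_lists m)"
    by (auto simp: inj_on_def)
  ultimately have "card {us \<in> unit_digit_lists. length us = n} = card (digits - {0}) * q ^ m"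
    by (simp add: card_image card_cartesian_product card_digit_lists)
  then show ?thesis using Suc card_digits zero_in_digits finite_digits by simp
qed

lemma finite_unit_digit_lists: "finite {us \<in> unit_digit_lists. length us = n}"
  by (rule finite_subset[OF _ finite_digit_lists[of n]]) (auto simp: unit_digit_lists_def)

end

section \<open>Submodules of rank-two free modules\<close>

lemma submod2_zero: "submod2 L \<Longrightarrow> (0, 0) \<in> L"
  unfolding submod2_def by blast

lemma submod2_add: "submod2 L \<Longrightarrow> (x, y) \<in> L \<Longrightarrow> (x', y') \<in> L \<Longrightarrow> (x + x', y + y') \<in> L"
  unfolding submod2_def by force

lemma submod2_smult: "submod2 L \<Longrightarrow> (x, y) \<in> L \<Longrightarrow> (c * x, c * y) \<in> L"
  unfolding submod2_def by force

lemma submod2_diff: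
  assumes "submod2 L" "(x, y) \<in> L" "(x', y') \<in> L" shows "(x - x', y - y') \<in> L"
  using submod2_add[OF assms(1,2) submod2_smult[OF assms(1,3), of "-1"]] by simp

lemma submod2_unit_smult_iff:
  assumes "submod2 L" "u dvd 1" shows "(u * x, u * y) \<in> L \<longleftrightarrow> (x, y) \<in> L"
proof
  obtain w where w: "1 = u * w" using assms(2) by (elim dvdE)
  assume "(u * x, u * y) \<in> L"
  then have "(w * (u * x), w * (u * y)) \<in> L" using submod2_smult assms(1) by blast
  moreover have "w * (u * z) = z" for z
    using w by (metis mult.assoc mult.commute mult_1)
  ultimately show "(x, y) \<in> L" by simp
qed (use submod2_smult assms(1) in blast)

lemma submod2_mem_if_dvd:
  assumes "submod2 L" "(a, 0) \<in> L" "(0, b) \<in> L" "a dvd x" "b dvd y"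
  shows "(x, y) \<in> L"
proof -
  obtain x' y' where "x = a * x'" "y = b * y'" using assms(4,5) by (elim dvdE)
  then show ?thesis
    using submod2_add[OF assms(1) submod2_smult[OF assms(1,2), of x'] submod2_smult[OF assms(1,3), of y']]
    by (simp add: mult.commute)
qed

definition quot2_rel :: "('a::comm_ring_1 \<times> 'a) set \<Rightarrow> (('a \<times> 'a) \<times> ('a \<times> 'a)) set" where
  "quot2_rel L = {(v, w). (fst v - fst w, snd v - snd w) \<in> L}"

lemma quot2_eq: "quot2 L = UNIV // quot2_rel L"
  unfolding quot2_def quot2_rel_def ..

lemma equiv_quot2_rel: assumes "submod2 L" shows "equiv UNIV (quot2_rel L)"
proof (rule equivI)
  show "sym (quot2_rel L)"
    unfolding sym_def quot2_rel_def using submod2_diff[OF assms submod2_zero[OF assms]] by force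
  show "trans (quot2_rel L)"
    unfolding trans_def quot2_rel_def using submod2_add[OF assms] by force
qed (auto intro: reflI simp: quot2_rel_def submod2_zero[OF assms])

definition finite_index_submods :: "('a::comm_ring_1 \<times> 'a) set set" where
  "finite_index_submods = {L. submod2 L \<and> finite (quot2 L)}"

lemma kron_subreps_eq:
  "kron_subreps TYPE('a::comm_ring_1) =
     {(L1, L2) \<in> finite_index_submods \<times> finite_index_submods. kron_f1 ` L1 \<subseteq> L2 \<and> kron_f2 ` L1 \<subseteq> L2}"
  unfolding kron_subreps_def finite_index_submods_def by auto

definition lin2 :: "'a::comm_ring_1 \<Rightarrow> 'a \<Rightarrow> 'a \<Rightarrow> 'a \<Rightarrow> 'a \<times> 'a \<Rightarrow> 'a \<times> 'a" where
  "lin2 a b c d v = (a * fst v + b * snd v, c * fst v + d * snd v)"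

lemma lin2_zero: "lin2 a b c d (0, 0) = (0, 0)"
  and lin2_add: "lin2 a b c d (fst v + fst w, snd v + snd w) =
     (fst (lin2 a b c d v) + fst (lin2 a b c d w), snd (lin2 a b c d v) + snd (lin2 a b c d w))"
  and lin2_diff: "lin2 a b c d (fst v - fst w, snd v - snd w) =
     (fst (lin2 a b c d v) - fst (lin2 a b c d w), snd (lin2 a b c d v) - snd (lin2 a b c d w))"
  and lin2_smult: "lin2 a b c d (k * fst v, k * snd v) = (k * fst (lin2 a b c d v), k * snd (lin2 a b c d v))"
  by (simp_all add: lin2_def algebra_simps)

lemma submod2_lin2_image:
  assumes L: "submod2 L" shows "submod2 (lin2 a b c d ` L)"
  unfolding submod2_def
proof (intro conjI ballI allI)
  show "(0, 0) \<in> lin2 a b c d ` L"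
    using submod2_zero[OF L] lin2_zero by (metis image_eqI)
next
  fix v w assume "v \<in> lin2 a b c d ` L" "w \<in> lin2 a b c d ` L"
  then obtain v' w' where "v = lin2 a b c d v'" "w = lin2 a b c d w'" "v' \<in> L" "w' \<in> L" by blast
  with submod2_add[OF L, of "fst v'" "snd v'" "fst w'" "snd w'"]
  show "(fst v + fst w, snd v + snd w) \<in> lin2 a b c d ` L"
    by (metis lin2_add image_eqI prod.collapse)
next
  fix k v assume "v \<in> lin2 a b c d ` L"
  then obtain v' where "v = lin2 a b c d v'" "v' \<in> L" by blast
  with submod2_smult[OF L, of "fst v'" "snd v'" k]
  show "(k * fst v, k * snd v) \<in> lin2 a b c d ` L"
    by (metis lin2_smult image_eqI prod.collapse)
qed

context
  fixes a b c d :: "'a::comm_ring_1" and F G :: "'a \<times> 'a \<Rightarrow> 'a \<times> 'a"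
  assumes F: "F = lin2 a b c d" and inverse: "\<And>v. G (F v) = v" "\<And>v. F (G v) = v"
begin

lemma quot2_rel_lin2_image: "quot2_rel (F ` L) `` {F v} = F ` (quot2_rel L `` {v})"
proof -
  have "inj F" using inverse by (metis injI)
  have rel: "(F v, F w) \<in> quot2_rel (F ` L) \<longleftrightarrow> (v, w) \<in> quot2_rel L" for w
    unfolding quot2_rel_def using lin2_diff[of a b c d v w, folded F, symmetric]
      inj_image_mem_iff[OF \<open>inj F\<close>] by simp
  show ?thesis
  proof (rule Set.set_eqI, rule iffI)
    fix w assume "w \<in> quot2_rel (F ` L) `` {F v}"
    then have "G w \<in> quot2_rel L `` {v}" using rel[of "G w"] inverse(2) by simp
    then show "w \<in> F ` (quot2_rel L `` {v})" using inverse(2) by (metis image_eqI)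
  qed (use rel in auto)
qed

lemma bij_betw_quot2_lin2_image: "bij_betw (image F) (quot2 L) (quot2 (F ` L))"
proof -
  have "inj F" using inverse by (metis injI)
  then have "inj_on (image F) (quot2 L)" by (simp add: inj_on_def inj_image_eq_iff)
  moreover have "image F ` quot2 L = quot2 (F ` L)"
  proof -
    have "image F ` quot2 L = (\<lambda>v. quot2_rel (F ` L) `` {F v}) ` UNIV"
      unfolding quot2_eq quotient_def quot2_rel_lin2_image by auto
    also have "\<dots> = (\<lambda>w. quot2_rel (F ` L) `` {w}) ` range F"
      by (simp add: image_image)
    also have "range F = UNIV" using inverse(2) by (metis surjI)
    finally show ?thesis unfolding quot2_eq quotient_def by auto
  qed
  ultimately show ?thesis by (simp add: bij_betw_def)
qed

lemma index2_lin2_image: "index2 (F ` L) = index2 L"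
  and finite_quot2_lin2_image_iff: "finite (quot2 (F ` L)) \<longleftrightarrow> finite (quot2 L)"
  using bij_betw_quot2_lin2_image[of L]
  by (simp_all add: index2_def bij_betw_same_card bij_betw_finite)

end

lemma bij_betw_lin2_image_finite_index_submods:
  assumes F: "F = lin2 a b c d" and G: "G = lin2 a' b' c' d'"
    and inverse: "\<And>v. G (F v) = v" "\<And>v. F (G v) = v"
  shows "bij_betw (image F) finite_index_submods finite_index_submods"
proof (rule bij_betw_byWitness[where f' = "image G"])
  show "\<forall>L\<in>finite_index_submods. G ` F ` L = L" "\<forall>L\<in>finite_index_submods. F ` G ` L = L"
    using inverse by (simp_all add: image_comp comp_def)
  show "image F ` finite_index_submods \<subseteq> finite_index_submods"
    using submod2_lin2_image finite_quot2_lin2_image_iff[OF F inverse]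
    by (auto simp: finite_index_submods_def F)
  show "image G ` finite_index_submods \<subseteq> finite_index_submods"
    using submod2_lin2_image finite_quot2_lin2_image_iff[OF G inverse(2,1)]
    by (auto simp: finite_index_submods_def G)
qed

lemma bij_betw_restrict_pairs:
  assumes "bij_betw f A B" "\<And>x y. x \<in> A \<Longrightarrow> y \<in> A \<Longrightarrow> R (f x) (f y) \<longleftrightarrow> S x y"
  shows "bij_betw (map_prod f f) {(x, y) \<in> A \<times> A. S x y} {(x, y) \<in> B \<times> B. R x y}"
proof -
  have bij: "bij_betw (map_prod f f) (A \<times> A) (B \<times> B)"
    by (rule bij_betw_map_prod[OF assms(1) assms(1)])
  show ?thesis
  proof (rule bij_betw_subset[OF bij], simp_all only: set_eq_iff)
    show "{(x, y) \<in> A \<times> A. S x y} \<subseteq> A \<times> A" by blast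
    show "\<forall>z. z \<in> map_prod f f ` {(x, y) \<in> A \<times> A. S x y} \<longleftrightarrow> z \<in> {(x, y) \<in> B \<times> B. R x y}"
      using assms(1) assms(2) unfolding bij_betw_def by (auto simp: image_iff)
  qed
qed

section \<open>Hermite normal forms\<close>

context cdvr
begin

text \<open>\<open>hnf (a, b, us)\<close> is the lattice spanned by the columns of the Hermite normal form
  \<open>[[\<pi>\<^sup>a, 0], [\<pi>\<^sup>b u, \<pi>\<^sup>b\<^sup>+\<^sup>l]]\<close> with \<open>u = expansion us\<close> and \<open>l = length us\<close>;
  the unit \<open>u\<close> only matters modulo \<open>\<pi>\<^sup>l\<close>.\<close>

fun hnf :: "nat \<times> nat \<times> 'a list \<Rightarrow> ('a \<times> 'a) set" where
  "hnf (a, b, us) = {(\<pi> ^ a * r, \<pi> ^ b * expansion us * r + \<pi> ^ (b + length us) * s) | r s. True}"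

declare hnf.simps [simp del]

fun hnf_size :: "nat \<times> nat \<times> 'a list \<Rightarrow> nat" where
  "hnf_size (a, b, us) = a + b + length us"

definition hnf_params :: "(nat \<times> nat \<times> 'a list) set" where
  "hnf_params = UNIV \<times> UNIV \<times> unit_digit_lists"

lemma mem_hnf:
  "(x, y) \<in> hnf (a, b, us) \<longleftrightarrow>
     (\<exists>r. x = \<pi> ^ a * r \<and> \<pi> ^ (b + length us) dvd y - \<pi> ^ b * expansion us * r)"
proof
  assume "(x, y) \<in> hnf (a, b, us)"
  then show "\<exists>r. x = \<pi> ^ a * r \<and> \<pi> ^ (b + length us) dvd y - \<pi> ^ b * expansion us * r"
    by (auto simp: hnf.simps)
next
  assume "\<exists>r. x = \<pi> ^ a * r \<and> \<pi> ^ (b + length us) dvd y - \<pi> ^ b * expansion us * r"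
  then obtain r s where "x = \<pi> ^ a * r" "y - \<pi> ^ b * expansion us * r = \<pi> ^ (b + length us) * s"
    by (auto elim: dvdE)
  then have "x = \<pi> ^ a * r" "y = \<pi> ^ b * expansion us * r + \<pi> ^ (b + length us) * s"
    by (simp_all add: diff_eq_eq)
  then show "(x, y) \<in> hnf (a, b, us)" by (auto simp: hnf.simps)
qed

lemma mem_hnf_scaled:
  "(\<pi> ^ a * r, y) \<in> hnf (a, b, us) \<longleftrightarrow> \<pi> ^ (b + length us) dvd y - \<pi> ^ b * expansion us * r"
  unfolding mem_hnf by simp

lemma mem_hnf_Nil: "(x, y) \<in> hnf (a, b, []) \<longleftrightarrow> \<pi> ^ a dvd x \<and> \<pi> ^ b dvd y"
  unfolding mem_hnf by (auto elim: dvdE)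

lemma hnf_fst_dvd: "(x, y) \<in> hnf (a, b, us) \<Longrightarrow> \<pi> ^ a dvd x"
  unfolding mem_hnf by auto

lemma hnf_snd_dvd: assumes "(x, y) \<in> hnf (a, b, us)" shows "\<pi> ^ b dvd y"
proof -
  obtain r where r: "\<pi> ^ (b + length us) dvd y - \<pi> ^ b * expansion us * r"
    using assms unfolding mem_hnf by blast
  then have "\<pi> ^ b dvd y - \<pi> ^ b * expansion us * r"
    by (metis dvd_trans le_add1 power_dvd_power_iff)
  then show ?thesis by (metis dvd_add_left_iff dvd_mult2 dvd_refl diff_add_cancel mult.assoc)
qed

lemma hnf_subset_hnf_Nil: assumes "n \<le> a" "m \<le> b" shows "hnf (a, b, us) \<subseteq> hnf (n, m, [])"
proof
  fix v assume "v \<in> hnf (a, b, us)"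
  then have "\<pi> ^ a dvd fst v" "\<pi> ^ b dvd snd v"
    using hnf_fst_dvd hnf_snd_dvd by (metis prod.collapse)+
  moreover have "\<pi> ^ n dvd \<pi> ^ a" "\<pi> ^ m dvd \<pi> ^ b" using assms by simp_all
  ultimately show "v \<in> hnf (n, m, [])"
    using mem_hnf_Nil[of "fst v" "snd v" n m] dvd_trans by (metis prod.collapse)
qed

lemma hnf_first_generator: "(\<pi> ^ a, \<pi> ^ b * expansion us) \<in> hnf (a, b, us)"
  using mem_hnf_scaled[of a 1] by simp

lemma hnf_second_generator:
  assumes "us \<in> unit_digit_lists" obtains x where "(x, \<pi> ^ b) \<in> hnf (a, b, us)"
proof (cases "us = []")
  case True
  with that show ?thesis using mem_hnf_Nil by auto
next
  case False
  then obtain w where w: "1 = expansion us * w" using expansion_unit assms by (metis dvdE)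
  have "(\<pi> ^ a * w, \<pi> ^ b) \<in> hnf (a, b, us)"
    unfolding mem_hnf_scaled using w by (simp add: mult.assoc)
  with that show ?thesis by blast
qed

lemma submod2_hnf: "submod2 (hnf (a, b, us))"
proof -
  let ?e = "b + length us" and ?c = "\<pi> ^ b * expansion us"
  have mem: "v \<in> hnf (a, b, us) \<longleftrightarrow> (\<exists>r. fst v = \<pi> ^ a * r \<and> \<pi> ^ ?e dvd snd v - ?c * r)" for v
    using mem_hnf[of "fst v" "snd v"] by simp
  have "(0, 0) \<in> hnf (a, b, us)" unfolding mem by (intro exI[of _ 0]) simp
  moreover have "(fst v + fst w, snd v + snd w) \<in> hnf (a, b, us)"
    if vw: "v \<in> hnf (a, b, us)" "w \<in> hnf (a, b, us)" for v w
  proof -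
    obtain r r' where r: "fst v = \<pi> ^ a * r" "fst w = \<pi> ^ a * r'"
      and d: "\<pi> ^ ?e dvd snd v - ?c * r" "\<pi> ^ ?e dvd snd w - ?c * r'"
      using vw unfolding mem by blast
    from d have "\<pi> ^ ?e dvd (snd v - ?c * r) + (snd w - ?c * r')" by (rule dvd_add)
    moreover have "(snd v - ?c * r) + (snd w - ?c * r') = snd v + snd w - ?c * (r + r')"
      by (simp add: algebra_simps)
    moreover have "fst v + fst w = \<pi> ^ a * (r + r')" using r by (simp add: distrib_left)
    ultimately show ?thesis unfolding mem by (intro exI[of _ "r + r'"]) simp
  qed
  moreover have "(k * fst v, k * snd v) \<in> hnf (a, b, us)" if v: "v \<in> hnf (a, b, us)" for k v
  proof -
    obtain r where r: "fst v = \<pi> ^ a * r" and d: "\<pi> ^ ?e dvd snd v - ?c * r"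
      using v unfolding mem by blast
    from d have "\<pi> ^ ?e dvd k * (snd v - ?c * r)" by simp
    moreover have "k * (snd v - ?c * r) = k * snd v - ?c * (k * r)"
      by (simp add: algebra_simps)
    moreover have "k * fst v = \<pi> ^ a * (k * r)" using r by (simp add: ac_simps)
    ultimately show ?thesis unfolding mem by (intro exI[of _ "k * r"]) simp
  qed
  ultimately show ?thesis unfolding submod2_def by blast
qed

lemma hnf_digit_pairs_inject:
  assumes "ds \<in> digit_lists a" "ds' \<in> digit_lists a"
    and "es \<in> digit_lists (b + length us)" "es' \<in> digit_lists (b + length us)"
    and "(expansion ds - expansion ds', expansion es - expansion es') \<in> hnf (a, b, us)"
  shows "ds = ds' \<and> es = es'"
proof -
  obtain r where r: "expansion ds - expansion ds' = \<pi> ^ a * r"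
    and d: "\<pi> ^ (b + length us) dvd expansion es - expansion es' - \<pi> ^ b * expansion us * r"
    using assms(5) unfolding mem_hnf by blast
  then have "ds = ds'" using expansion_unique assms(1,2) by auto
  with r have "r = 0" by simp
  with d have "es = es'" using expansion_unique assms(3,4) by auto
  with \<open>ds = ds'\<close> show ?thesis ..
qed

lemma hnf_digit_pair_exists:
  obtains ds es where "ds \<in> digit_lists a" "es \<in> digit_lists (b + length us)"
    "(x - expansion ds, y - expansion es) \<in> hnf (a, b, us)"
proof -
  obtain ds where ds: "ds \<in> digit_lists a" "\<pi> ^ a dvd x - expansion ds"
    using expansion_exists by blast
  then obtain r where r: "x - expansion ds = \<pi> ^ a * r" by (elim dvdE)
  obtain es where es: "es \<in> digit_lists (b + length us)"
    "\<pi> ^ (b + length us) dvd y - \<pi> ^ b * expansion us * r - expansion es"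
    using expansion_exists by blast
  have "(x - expansion ds, y - expansion es) \<in> hnf (a, b, us)"
    unfolding r mem_hnf_scaled using es(2) by (simp add: algebra_simps)
  with ds es show thesis using that by blast
qed

lemma bij_betw_digit_lists_quot2_hnf:
  "bij_betw (\<lambda>(ds, es). quot2_rel (hnf (a, b, us)) `` {(expansion ds, expansion es)})
     (digit_lists a \<times> digit_lists (b + length us)) (quot2 (hnf (a, b, us)))"
proof -
  let ?L = "hnf (a, b, us)"
  have equiv: "equiv UNIV (quot2_rel ?L)" by (rule equiv_quot2_rel[OF submod2_hnf])
  have rel: "((x, y), (x', y')) \<in> quot2_rel ?L \<longleftrightarrow> (x - x', y - y') \<in> ?L" for x y x' y'
    by (simp add: quot2_rel_def)
  show ?thesis
    unfolding bij_betw_def inj_on_def quot2_eq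
  proof (intro conjI ballI impI Set.set_eqI iffI)
    fix u u' assume "u \<in> digit_lists a \<times> digit_lists (b + length us)"
      "u' \<in> digit_lists a \<times> digit_lists (b + length us)"
      "(\<lambda>(ds, es). quot2_rel ?L `` {(expansion ds, expansion es)}) u =
       (\<lambda>(ds, es). quot2_rel ?L `` {(expansion ds, expansion es)}) u'"
    then show "u = u'"
      using hnf_digit_pairs_inject eq_equiv_class_iff[OF equiv] rel by (auto simp: prod_eq_iff)
  next
    fix K assume "K \<in> UNIV // quot2_rel ?L"
    then obtain x y where K: "K = quot2_rel ?L `` {(x, y)}" by (auto elim: quotientE)
    obtain ds es where "ds \<in> digit_lists a" "es \<in> digit_lists (b + length us)"
      "(x - expansion ds, y - expansion es) \<in> ?L" by (rule hnf_digit_pair_exists)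
    with K show "K \<in> (\<lambda>(ds, es). quot2_rel ?L `` {(expansion ds, expansion es)}) `
        (digit_lists a \<times> digit_lists (b + length us))"
      using rel equiv_class_eq[OF equiv] by force
  qed (auto intro: quotientI)
qed

lemma finite_quot2_hnf: "finite (quot2 (hnf (a, b, us)))"
  using bij_betw_finite[OF bij_betw_digit_lists_quot2_hnf] finite_digit_lists by blast

lemma index2_hnf: "index2 (hnf x) = q ^ hnf_size x"
proof (cases x)
  case (fields a b us)
  have "index2 (hnf x) = card (digit_lists a \<times> digit_lists (b + length us))"
    unfolding index2_def fields using bij_betw_same_card[OF bij_betw_digit_lists_quot2_hnf] by simp
  then show ?thesis unfolding fields by (simp add: card_cartesian_product card_digit_lists power_add)
qed

lemma power_0_mem_hnf_iff:
  assumes "us \<in> unit_digit_lists"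
  shows "(\<pi> ^ n, 0) \<in> hnf (a, b, us) \<longleftrightarrow> a + length us \<le> n"
proof
  assume mem: "(\<pi> ^ n, 0) \<in> hnf (a, b, us)"
  then have "a \<le> n" using hnf_fst_dvd power_dvd_power_iff by blast
  then have pn: "\<pi> ^ n = \<pi> ^ a * \<pi> ^ (n - a)" by (simp flip: power_add)
  have d: "\<pi> ^ (b + length us) dvd expansion us * \<pi> ^ (b + (n - a))"
    using mem unfolding pn mem_hnf_scaled by (simp add: power_add ac_simps)
  show "a + length us \<le> n"
  proof (cases "us = []")
    case False
    with d have "b + length us \<le> b + (n - a)"
      using power_dvd_unit_mult_power_iff expansion_unit assms by blast
    with \<open>a \<le> n\<close> show ?thesis by simp
  qed (use \<open>a \<le> n\<close> in simp)
next
  assume le: "a + length us \<le> n"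
  then have pn: "\<pi> ^ n = \<pi> ^ a * \<pi> ^ (n - a)" by (simp flip: power_add)
  from le have "\<pi> ^ (b + length us) dvd \<pi> ^ b * \<pi> ^ (n - a)"
    by (simp flip: power_add)
  then have "\<pi> ^ (b + length us) dvd \<pi> ^ b * \<pi> ^ (n - a) * expansion us"
    by (rule dvd_mult2)
  then have "\<pi> ^ (b + length us) dvd 0 - \<pi> ^ b * expansion us * \<pi> ^ (n - a)"
    by (simp add: mult_ac)
  then show "(\<pi> ^ n, 0) \<in> hnf (a, b, us)" unfolding pn mem_hnf_scaled .
qed

lemma zero_power_mem_hnf_iff: "(0, \<pi> ^ n) \<in> hnf (a, b, us) \<longleftrightarrow> b + length us \<le> n"
  using mem_hnf_scaled[of a 0 "\<pi> ^ n"] by simp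

lemma hnf_Nil_subset_iff:
  assumes "submod2 M" shows "hnf (n, m, []) \<subseteq> M \<longleftrightarrow> (\<pi> ^ n, 0) \<in> M \<and> (0, \<pi> ^ m) \<in> M"
proof
  assume "hnf (n, m, []) \<subseteq> M"
  then show "(\<pi> ^ n, 0) \<in> M \<and> (0, \<pi> ^ m) \<in> M" using mem_hnf_Nil by auto
next
  assume "(\<pi> ^ n, 0) \<in> M \<and> (0, \<pi> ^ m) \<in> M"
  then show "hnf (n, m, []) \<subseteq> M"
    using submod2_mem_if_dvd[OF assms] mem_hnf_Nil by (auto simp: subset_iff)
qed

lemma hnf_Nil_subset_hnf_iff:
  assumes "us \<in> unit_digit_lists"
  shows "hnf (n, m, []) \<subseteq> hnf (a, b, us) \<longleftrightarrow> a + length us \<le> n \<and> b + length us \<le> m"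
  by (simp add: hnf_Nil_subset_iff[OF submod2_hnf] power_0_mem_hnf_iff[OF assms]
      zero_power_mem_hnf_iff)

lemma hnf_inject:
  assumes us: "us \<in> unit_digit_lists" "us' \<in> unit_digit_lists"
    and eq: "hnf (a, b, us) = hnf (a', b', us')"
  shows "(a, b, us) = (a', b', us')"
proof -
  have "a' \<le> a" "a \<le> a'"
    using hnf_first_generator hnf_fst_dvd eq power_dvd_power_iff by metis+
  then have a: "a = a'" by simp
  obtain x x' where "(x, \<pi> ^ b) \<in> hnf (a, b, us)" "(x', \<pi> ^ b') \<in> hnf (a', b', us')"
    using hnf_second_generator us by metis
  then have "b' \<le> b" "b \<le> b'" using eq hnf_snd_dvd power_dvd_power_iff by metis+
  then have b: "b = b'" by simp
  have "b' + length us' \<le> b + length us" "b + length us \<le> b' + length us'"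
    using eq zero_power_mem_hnf_iff by blast+
  with b have l: "length us = length us'" by simp
  have "(\<pi> ^ a * 1, \<pi> ^ b * expansion us) \<in> hnf (a', b', us')"
    using hnf_first_generator[of a b us] eq by simp
  then have "\<pi> ^ b * \<pi> ^ length us dvd \<pi> ^ b * (expansion us - expansion us')"
    unfolding a mem_hnf_scaled b l by (simp add: power_add algebra_simps)
  then have "\<pi> ^ length us dvd expansion us - expansion us'" by simp
  then have "us = us'" using expansion_unique us l by (auto simp: unit_digit_lists_def)
  with a b show ?thesis by simp
qed

text \<open>Pigeonhole: two of the classes of \<open>\<pi>\<^sup>k v\<close>, \<open>k \<le> index2 L\<close>, coincide, and the
  difference \<open>\<pi>\<^sup>j (1 - \<pi>\<^sup>k\<^sup>-\<^sup>j) v\<close> is a unit multiple of \<open>\<pi>\<^sup>j v\<close>.\<close>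

lemma finite_index_power_smult_mem:
  assumes L: "submod2 L" "finite (quot2 L)"
  obtains k where "(\<pi> ^ k * x, \<pi> ^ k * y) \<in> L"
proof -
  let ?N = "card (quot2 L)"
  let ?f = "\<lambda>k. quot2_rel L `` {(\<pi> ^ k * x, \<pi> ^ k * y)}"
  have sub: "?f ` {0..?N} \<subseteq> quot2 L" unfolding quot2_eq by (auto intro: quotientI)
  have "\<not> inj_on ?f {0..?N}"
  proof
    assume "inj_on ?f {0..?N}"
    from card_inj_on_le[OF this sub L(2)] show False by simp
  qed
  then obtain j k where "j \<noteq> k" "?f j = ?f k" unfolding inj_on_def by blast
  then obtain j k where jk: "j < k" "?f j = ?f k" by (metis linorder_neqE_nat)
  then have "((\<pi> ^ j * x, \<pi> ^ j * y), (\<pi> ^ k * x, \<pi> ^ k * y)) \<in> quot2_rel L"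
    using eq_equiv_class_iff[OF equiv_quot2_rel[OF L(1)] UNIV_I UNIV_I] by blast
  then have "(\<pi> ^ j * x - \<pi> ^ k * x, \<pi> ^ j * y - \<pi> ^ k * y) \<in> L"
    by (simp add: quot2_rel_def)
  moreover have "\<pi> ^ k = \<pi> ^ j * \<pi> ^ (k - j)" using jk(1) by (simp flip: power_add)
  ultimately have "((1 - \<pi> ^ (k - j)) * (\<pi> ^ j * x), (1 - \<pi> ^ (k - j)) * (\<pi> ^ j * y)) \<in> L"
    by (simp add: algebra_simps)
  then have "(\<pi> ^ j * x, \<pi> ^ j * y) \<in> L"
    using submod2_unit_smult_iff[OF L(1) one_minus_power_unit] jk(1) by simp
  then show thesis by (rule that)
qed

lemma unit_digits_approximation:
  obtains b us where "us \<in> unit_digit_lists" "b + length us = e"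
    "\<pi> ^ e dvd c - \<pi> ^ b * expansion us"
proof (cases "\<pi> ^ e dvd c")
  case True
  then show thesis using that[of "[]" e] by (simp add: unit_digit_lists_def)
next
  case False
  then have "c \<noteq> 0" by auto
  then obtain u b where u: "u dvd 1" "c = u * \<pi> ^ b" by (rule unit_mult_power_factorization)
  have "b < e"
  proof (rule ccontr)
    assume "\<not> b < e"
    then have "\<pi> ^ e dvd \<pi> ^ b" by simp
    with False u(2) show False by (simp add: dvd_mult)
  qed
  obtain us where us: "us \<in> digit_lists (e - b)" "\<pi> ^ (e - b) dvd u - expansion us"
    using expansion_exists by blast
  have "us \<in> unit_digit_lists"
  proof -
    obtain d ds where d: "us = d # ds" using us(1) \<open>b < e\<close> by (cases us) auto
    have "\<pi> dvd u - expansion us" using us(2) \<open>b < e\<close> by (metis dvd_power dvd_trans zero_less_diff)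
    then have "\<not> \<pi> dvd expansion us" using u(1) unit_iff_not_dvd by (metis diff_add_cancel dvd_add)
    then have "d \<noteq> 0" using d by auto
    then show ?thesis using d us(1) by (simp add: unit_digit_lists_def)
  qed
  moreover have "\<pi> ^ e dvd c - \<pi> ^ b * expansion us"
  proof -
    have "\<pi> ^ b * \<pi> ^ (e - b) dvd \<pi> ^ b * (u - expansion us)" using us(2) by simp
    then show ?thesis using u(2) \<open>b < e\<close> by (simp add: algebra_simps flip: power_add)
  qed
  ultimately show thesis using that[of us b] us(1) \<open>b < e\<close> by simp
qed

lemma submod2_eq_hnf_if_generators:
  assumes L: "submod2 L" and gen: "(\<pi> ^ a, c) \<in> L" "(0, \<pi> ^ e) \<in> L"
    and fst_dvd: "\<And>x y. (x, y) \<in> L \<Longrightarrow> \<pi> ^ a dvd x"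
    and snd_dvd: "\<And>y. (0, y) \<in> L \<Longrightarrow> \<pi> ^ e dvd y"
    and c: "b + length us = e" "\<pi> ^ e dvd c - \<pi> ^ b * expansion us"
  shows "L = hnf (a, b, us)"
proof -
  have memL: "(x, y) \<in> L \<longleftrightarrow> (\<exists>r. x = \<pi> ^ a * r \<and> \<pi> ^ e dvd y - c * r)" for x y
  proof
    assume xy: "(x, y) \<in> L"
    then obtain r where r: "x = \<pi> ^ a * r" using fst_dvd by (metis dvdE)
    have "(x - r * \<pi> ^ a, y - r * c) \<in> L"
      using submod2_diff[OF L xy submod2_smult[OF L gen(1)]] .
    then have "(0, y - c * r) \<in> L" using r by (simp add: mult.commute)
    with r snd_dvd show "\<exists>r. x = \<pi> ^ a * r \<and> \<pi> ^ e dvd y - c * r" by blast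
  next
    assume "\<exists>r. x = \<pi> ^ a * r \<and> \<pi> ^ e dvd y - c * r"
    then obtain r k where r: "x = \<pi> ^ a * r" and "y - c * r = \<pi> ^ e * k" by (auto elim: dvdE)
    then have "y = r * c + k * \<pi> ^ e" by (simp add: diff_eq_eq ac_simps)
    with r show "(x, y) \<in> L"
      using submod2_add[OF L submod2_smult[OF L gen(1)] submod2_smult[OF L gen(2)], of r k]
      by (simp add: ac_simps)
  qed
  have shift: "\<pi> ^ e dvd y - c * r \<longleftrightarrow> \<pi> ^ e dvd y - \<pi> ^ b * expansion us * r" for y r
  proof -
    have D: "\<pi> ^ e dvd (c - \<pi> ^ b * expansion us) * r" using c(2) by simp
    have "y - \<pi> ^ b * expansion us * r = (y - c * r) + (c - \<pi> ^ b * expansion us) * r"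
      "y - c * r = (y - \<pi> ^ b * expansion us * r) - (c - \<pi> ^ b * expansion us) * r"
      by (simp_all add: algebra_simps)
    with D show ?thesis by (metis dvd_add dvd_diff)
  qed
  show ?thesis
  proof (rule Set.set_eqI)
    fix v :: "'a \<times> 'a"
    show "v \<in> L \<longleftrightarrow> v \<in> hnf (a, b, us)"
      using memL[of "fst v" "snd v"] mem_hnf[of "fst v" "snd v"] shift c(1) by simp
  qed
qed

lemma hnf_exists:
  assumes L: "submod2 L" "finite (quot2 L)"
  obtains x where "x \<in> hnf_params" "L = hnf x"
proof -
  obtain k where "(\<pi> ^ k * 1, \<pi> ^ k * 0) \<in> L" by (rule finite_index_power_smult_mem[OF L])
  then have ex_a: "\<exists>n y. (\<pi> ^ n, y) \<in> L" by auto
  define a where "a = (LEAST n. \<exists>y. (\<pi> ^ n, y) \<in> L)"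
  obtain c where c: "(\<pi> ^ a, c) \<in> L" using LeastI_ex[OF ex_a] unfolding a_def by blast
  have fst_dvd: "\<pi> ^ a dvd x" if xy: "(x, y) \<in> L" for x y
  proof (cases "x = 0")
    case False
    then obtain u n where u: "u dvd 1" "x = u * \<pi> ^ n" by (rule unit_mult_power_factorization)
    then obtain w where "1 = u * w" by (elim dvdE)
    then have "(u * \<pi> ^ n, u * (w * y)) \<in> L" using xy u(2) by (simp flip: mult.assoc)
    then have "\<exists>y. (\<pi> ^ n, y) \<in> L" using submod2_unit_smult_iff[OF L(1) u(1)] by blast
    then have "a \<le> n" unfolding a_def by (rule Least_le)
    then show ?thesis using u(2) by (simp add: dvd_mult)
  qed simp
  obtain k where "(\<pi> ^ k * 0, \<pi> ^ k * 1) \<in> L" by (rule finite_index_power_smult_mem[OF L])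
  then have ex_e: "(0, \<pi> ^ k) \<in> L" by simp
  define e where "e = (LEAST n. (0, \<pi> ^ n) \<in> L)"
  have e: "(0, \<pi> ^ e) \<in> L" unfolding e_def using ex_e by (rule LeastI)
  have snd_dvd: "\<pi> ^ e dvd y" if y: "(0, y) \<in> L" for y
  proof (cases "y = 0")
    case False
    then obtain u n where u: "u dvd 1" "y = u * \<pi> ^ n" by (rule unit_mult_power_factorization)
    then have "(u * 0, u * \<pi> ^ n) \<in> L" using y by simp
    then have "(0, \<pi> ^ n) \<in> L" using submod2_unit_smult_iff[OF L(1) u(1), of 0] by simp
    then have "e \<le> n" unfolding e_def by (rule Least_le)
    then show ?thesis using u(2) by (simp add: dvd_mult)
  qed simp
  obtain b us where us: "us \<in> unit_digit_lists" "b + length us = e"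
    "\<pi> ^ e dvd c - \<pi> ^ b * expansion us"
    by (rule unit_digits_approximation)
  have "L = hnf (a, b, us)"
    using submod2_eq_hnf_if_generators[OF L(1) c e fst_dvd snd_dvd us(2,3)] .
  with us(1) show thesis by (intro that[of "(a, b, us)"]) (simp_all add: hnf_params_def)
qed

lemma bij_betw_hnf: "bij_betw hnf hnf_params finite_index_submods"
proof -
  have "inj_on hnf hnf_params"
    using hnf_inject by (auto simp: inj_on_def hnf_params_def)
  moreover have "hnf ` hnf_params = finite_index_submods"
    using submod2_hnf finite_quot2_hnf hnf_exists
    by (fastforce simp: finite_index_submods_def hnf_params_def)
  ultimately show ?thesis by (simp add: bij_betw_def)
qed

end

section \<open>The residue field and square roots of \<open>-1\<close>\<close>

lemma (in group) two_power_dvd_order: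
  assumes "x \<in> carrier G" "x [^] (2 ^ Suc k :: nat) = \<one>" "x [^] (2 ^ k :: nat) \<noteq> \<one>"
  shows "2 ^ Suc k dvd order G"
proof -
  have "ord x dvd 2 ^ Suc k" "\<not> ord x dvd 2 ^ k" using assms pow_eq_id by blast+
  have "\<exists>i\<le>Suc k. ord x = 2 ^ i"
    using divides_primepow_nat[OF two_is_prime_nat] \<open>ord x dvd 2 ^ Suc k\<close> by blast
  then obtain i where i: "i \<le> Suc k" "ord x = 2 ^ i" by blast
  with \<open>\<not> ord x dvd 2 ^ k\<close> have "ord x = 2 ^ Suc k"
    by (metis le_SucE le_imp_power_dvd)
  then show ?thesis using ord_dvd_group_order[OF assms(1)] by simp
qed

definition type_ring :: "'a::comm_ring_1 ring" where
  "type_ring = \<lparr>carrier = UNIV, monoid.mult = (*), one = 1, zero = 0, add = (+)\<rparr>"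

lemma type_ring_simps [simp]:
  "carrier type_ring = UNIV"
  "x \<otimes>\<^bsub>type_ring\<^esub> y = x * y" "\<one>\<^bsub>type_ring\<^esub> = 1"
  "\<zero>\<^bsub>type_ring\<^esub> = 0" "x \<oplus>\<^bsub>type_ring\<^esub> y = x + y"
  by (simp_all add: type_ring_def)

lemma cring_type_ring: "cring (type_ring :: 'a::comm_ring_1 ring)"
proof -
  have "\<exists>y. x + y = 0" for x :: 'a
    by (metis add.right_inverse)
  then show ?thesis
    unfolding type_ring_def by unfold_locales (auto simp: algebra_simps Units_def)
qed

context cdvr
begin

definition res_field :: "'a set ring" where
  "res_field = type_ring Quot {x. \<pi> dvd x}"

definition res :: "'a \<Rightarrow> 'a set" where
  "res x = {x. \<pi> dvd x} +>\<^bsub>type_ring\<^esub> x"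

lemma maximalideal_dvd_uniformizer:
  "maximalideal {x. \<pi> dvd x} (type_ring :: 'a ring)"
proof -
  have "cgenideal type_ring \<pi> = {x. \<pi> dvd x}"
    unfolding cgenideal_def by (auto simp: dvd_def mult.commute)
  then have ideal: "ideal {x. \<pi> dvd x} (type_ring :: 'a ring)"
    using cring.cgenideal_ideal[OF cring_type_ring, of \<pi>] by simp
  show ?thesis
  proof (rule maximalidealI[OF ideal])
    show "carrier type_ring \<noteq> {x. \<pi> dvd x}"
      using uniformizer_not_unit by auto
  next
    fix J assume J: "ideal J type_ring" "{x. \<pi> dvd x} \<subseteq> J"
    show "J = {x. \<pi> dvd x} \<or> J = carrier type_ring"
    proof (cases "J = {x. \<pi> dvd x}")
      case False
      then obtain x where x: "x \<in> J" "\<not> \<pi> dvd x" using J by blast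
      then obtain w where w: "1 = x * w" using unit_iff_not_dvd by (metis dvdE)
      have "w \<otimes>\<^bsub>type_ring\<^esub> x \<in> J" using ideal.I_l_closed[OF J(1) x(1)] by simp
      then have "\<one>\<^bsub>type_ring\<^esub> \<in> J" using w by (simp add: mult.commute)
      then show ?thesis using ideal.one_imp_carrier[OF J(1)] by blast
    qed simp
  qed
qed

lemma field_res_field: "field res_field"
  unfolding res_field_def
  by (rule maximalideal.quotient_is_field[OF maximalideal_dvd_uniformizer cring_type_ring])

lemma res_ring_hom: "res \<in> ring_hom type_ring res_field"
proof -
  have "ideal {x. \<pi> dvd x} (type_ring :: 'a ring)"
    using maximalideal_dvd_uniformizer by (rule maximalideal.axioms(1))
  then show ?thesis
    unfolding res_field_def res_def[abs_def] by (rule ideal.rcos_ring_hom)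
qed

lemma res_eq: "res x = {z. \<pi> dvd z - x}"
  unfolding res_def a_r_coset_def' by (auto simp: algebra_simps)

lemma res_eq_iff: "res x = res y \<longleftrightarrow> \<pi> dvd x - y"
proof
  assume "res x = res y"
  then have "x \<in> res y" unfolding res_eq by auto
  then show "\<pi> dvd x - y" by (simp add: res_eq)
next
  assume xy: "\<pi> dvd x - y"
  have "\<pi> dvd z - x \<longleftrightarrow> \<pi> dvd z - y" for z
  proof -
    have "z - y = (z - x) + (x - y)" "z - x = (z - y) - (x - y)" by simp_all
    with xy show ?thesis by (metis dvd_add dvd_diff)
  qed
  then show "res x = res y" unfolding res_eq by simp
qed

lemma carrier_res_field: "carrier res_field = range res"
  unfolding res_field_def FactRing_def A_RCOSETS_def' res_def by auto

lemma carrier_res_field_eq: "carrier res_field = residue_field TYPE('a)"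
proof -
  have "residue_rel `` {x} = res x" for x
    unfolding res_eq residue_rel_def using dvd_diff_swap by auto
  then show ?thesis unfolding carrier_res_field residue_field_eq quotient_def by auto
qed

lemma card_res_field: "card (carrier res_field) = q"
  and finite_res_field: "finite (carrier res_field)"
  using residue_card finite_residue_field
  by (simp_all add: carrier_res_field_eq residue_card_def)

lemma res_add: "res (x + y) = res x \<oplus>\<^bsub>res_field\<^esub> res y"
  and res_mult: "res (x * y) = res x \<otimes>\<^bsub>res_field\<^esub> res y"
  and res_one: "res 1 = \<one>\<^bsub>res_field\<^esub>"
  using ring_hom_add[OF res_ring_hom, of x y] ring_hom_mult[OF res_ring_hom, of x y]
    ring_hom_one[OF res_ring_hom]
  by simp_all

lemma res_pow: "res (x ^ n) = res x [^]\<^bsub>res_field\<^esub> n"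
proof (induction n)
  case (Suc n)
  have "res (x ^ Suc n) = res (x ^ n * x)" by (simp add: mult.commute)
  then show ?case by (simp add: res_mult Suc)
qed (simp add: res_one)

lemma res_zero: "res 0 = \<zero>\<^bsub>res_field\<^esub>"
  using ring_hom_zero[OF res_ring_hom cring_type_ring[THEN cring.axioms(1)]
      field_res_field[THEN field.is_ring]] by simp

lemma res_mem_units: "\<not> \<pi> dvd x \<Longrightarrow> res x \<in> carrier (mult_of res_field)"
  using res_eq_iff[of x 0] carrier_res_field by (simp add: res_zero[symmetric])

lemma res_eq_one_iff: "res x = \<one>\<^bsub>res_field\<^esub> \<longleftrightarrow> \<pi> dvd x - 1"
  using res_eq_iff[of x 1] by (simp add: res_one)

lemma order_mult_of_res_field: "order (mult_of res_field) = q - 1"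
  using field.order_mult_of[OF field_res_field finite_res_field] card_res_field by (simp add: order_def)

lemma residue_card_ge_2: "2 \<le> q"
proof -
  have "res 0 \<noteq> res 1" using res_eq_iff[of 0 1] uniformizer_not_unit by simp
  then have "card {res 0, res 1} \<le> card (carrier res_field)"
    by (intro card_mono finite_res_field) (auto simp: carrier_res_field)
  with \<open>res 0 \<noteq> res 1\<close> show ?thesis using card_res_field by simp
qed

lemma uniformizer_not_dvd_2: assumes "odd q" shows "\<not> \<pi> dvd 2"
proof
  assume "\<pi> dvd 2"
  let ?G = "add_monoid res_field"
  interpret G: group ?G
    using field_res_field field.is_ring ring.is_abelian_group abelian_group.a_group by blast
  have one: "res 1 \<in> carrier ?G" by (simp add: carrier_res_field)
  have "res 1 [^]\<^bsub>?G\<^esub> (2 ^ Suc 0 :: nat) = res 0 \<oplus>\<^bsub>res_field\<^esub> res 1 \<oplus>\<^bsub>res_field\<^esub> res 1"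
    by (simp add: numeral_2_eq_2 res_zero)
  also have "\<dots> = res 0" using \<open>\<pi> dvd 2\<close> res_eq_iff[of 2 0] by (simp flip: res_add)
  finally have "res 1 [^]\<^bsub>?G\<^esub> (2 ^ Suc 0 :: nat) = \<one>\<^bsub>?G\<^esub>" by (simp add: res_zero)
  moreover have "res 1 [^]\<^bsub>?G\<^esub> (2 ^ 0 :: nat) \<noteq> \<one>\<^bsub>?G\<^esub>"
    using res_eq_iff[of 1 0] uniformizer_not_unit res_zero res_add[of 0 1] by simp
  ultimately have "2 dvd order ?G" using G.two_power_dvd_order[OF one] by fastforce
  with assms show False using card_res_field by (simp add: order_def)
qed

lemma exists_sqrt_minus_one_mod:
  assumes "q mod 4 = 1" obtains x where "\<pi> dvd x ^ 2 + 1"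
proof -
  let ?M = "mult_of res_field"
  interpret M: group ?M using field_res_field by (rule field.field_mult_group)
  have finM: "finite (carrier ?M)" using finite_res_field by simp
  obtain g where g: "g \<in> carrier ?M" "carrier ?M = {g [^]\<^bsub>?M\<^esub> i | i::nat. i \<in> UNIV}"
    using field.finite_field_mult_group_has_gen[OF field_res_field finite_res_field]
    by (auto simp: nat_pow_mult_of)
  define k where "k = (q - 1) div 4"
  have k: "q - 1 = 4 * k" "0 < k"
    using assms residue_card_ge_2 unfolding k_def by presburger+
  have order: "order ?M = 4 * k"
    by (simp only: order_mult_of_res_field k(1))
  have "M.ord g = 4 * k"
    using M.generate_pow_card[OF g(1)] M.generate_pow_on_finite_carrier[OF finM g(1)] g(2) order
    by (simp add: order_def)
  obtain x where x: "g = res x" using g(1) carrier_res_field by auto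
  have "res (x ^ (4 * k)) = g [^]\<^bsub>?M\<^esub> order ?M"
    by (simp add: x res_pow nat_pow_mult_of order)
  also have "\<dots> = \<one>\<^bsub>res_field\<^esub>" using M.pow_order_eq_1[OF g(1)] by simp
  finally have "\<pi> dvd x ^ (4 * k) - 1" using res_eq_one_iff by simp
  moreover have "x ^ (4 * k) - 1 = (x ^ (2 * k) - 1) * (x ^ (2 * k) + 1)"
    by (simp add: algebra_simps power_mult[symmetric] power2_eq_square[symmetric] mult.commute)
  ultimately have "\<pi> dvd (x ^ (2 * k) - 1) * (x ^ (2 * k) + 1)" by simp
  moreover have "\<not> M.ord g dvd 2 * k" using \<open>M.ord g = 4 * k\<close> k(2) by simp
  then have "res (x ^ (2 * k)) \<noteq> \<one>\<^bsub>res_field\<^esub>"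
    using M.pow_eq_id[OF g(1)] by (simp add: x res_pow nat_pow_mult_of)
  then have "\<not> \<pi> dvd x ^ (2 * k) - 1" using res_eq_one_iff by simp
  ultimately have "\<pi> dvd (x ^ k) ^ 2 + 1"
    using prime_elem_dvd_mult_iff[OF prime_elem_uniformizer] by (simp add: power_mult mult.commute)
  then show thesis by (rule that)
qed

lemma no_sqrt_minus_one_mod:
  assumes "odd q" "q mod 4 \<noteq> 1" shows "\<not> \<pi> dvd x ^ 2 + 1"
proof
  let ?M = "mult_of res_field"
  interpret M: group ?M using field_res_field by (rule field.field_mult_group)
  assume sq: "\<pi> dvd x ^ 2 + 1"
  then have "\<not> \<pi> dvd x"
    using uniformizer_not_unit dvd_add_right_iff dvd_mult2 power2_eq_square by metis
  then have x: "res x \<in> carrier ?M" by (rule res_mem_units)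
  have "x ^ 4 - 1 = (x ^ 2 + 1) * (x ^ 2 - 1)"
    by (simp add: algebra_simps power2_eq_square power4_eq_xxxx)
  with sq have four: "res x [^]\<^bsub>?M\<^esub> (2 ^ Suc 1 :: nat) = \<one>\<^bsub>?M\<^esub>"
    using res_eq_one_iff[of "x ^ 4"] by (simp add: res_pow nat_pow_mult_of)
  moreover have "\<not> \<pi> dvd x ^ 2 - 1"
  proof
    assume "\<pi> dvd x ^ 2 - 1"
    with sq have "\<pi> dvd (x ^ 2 + 1) - (x ^ 2 - 1)" by (rule dvd_diff)
    then show False using uniformizer_not_dvd_2 assms(1) by simp
  qed
  then have "res x [^]\<^bsub>?M\<^esub> (2 ^ 1 :: nat) \<noteq> \<one>\<^bsub>?M\<^esub>"
    using res_eq_one_iff[of "x ^ 2"] by (simp add: res_pow nat_pow_mult_of)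
  from M.two_power_dvd_order[OF x four this] have "4 dvd q - 1"
    using order_mult_of_res_field by simp
  with assms residue_card_ge_2 show False by presburger
qed

lemma hensel_sqrt_step:
  assumes "\<not> \<pi> dvd 2 * x" "\<pi> ^ Suc n dvd x ^ 2 - a"
  shows "\<exists>x'. \<pi> ^ Suc n dvd x' - x \<and> \<pi> ^ Suc (Suc n) dvd x' ^ 2 - a"
proof -
  obtain c where c: "x ^ 2 - a = \<pi> ^ Suc n * c" using assms(2) by (elim dvdE)
  obtain w where w: "1 = 2 * x * w" using assms(1) unit_iff_not_dvd by (metis dvdE)
  define x' where "x' = x - \<pi> ^ Suc n * c * w"
    \<comment> \<open>the Newton step \<open>x - (x\<^sup>2 - a) / (2 x)\<close>\<close>
  have "x' - x = \<pi> ^ Suc n * (- c * w)" unfolding x'_def by (simp add: algebra_simps)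
  then have "\<pi> ^ Suc n dvd x' - x" by (rule dvdI)
  moreover have "x' ^ 2 - a = (x ^ 2 - a) - \<pi> ^ Suc n * c * (2 * x * w) + (\<pi> ^ Suc n * c * w) ^ 2"
    unfolding x'_def by (simp add: algebra_simps power2_eq_square)
  then have "x' ^ 2 - a = \<pi> ^ Suc (Suc n) * (\<pi> ^ n * (c * w) ^ 2)"
    unfolding c w[symmetric] by (simp add: algebra_simps power2_eq_square)
  then have "\<pi> ^ Suc (Suc n) dvd x' ^ 2 - a" by (rule dvdI)
  ultimately show ?thesis by blast
qed

text \<open>Newton steps converge by completeness.\<close>

lemma sqrt_exists_if_sqrt_mod:
  assumes q: "odd q" and a: "\<not> \<pi> dvd a" and x: "\<pi> dvd x ^ 2 - a"
  obtains y where "y ^ 2 = a"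
proof -
  have unit: "\<not> \<pi> dvd 2 * z" if "\<pi> dvd z ^ 2 - a" for z
  proof
    assume "\<pi> dvd 2 * z"
    then have "\<pi> dvd z"
      using uniformizer_not_dvd_2[OF q] prime_elem_dvd_mult_iff[OF prime_elem_uniformizer] by blast
    then have "\<pi> dvd z ^ 2" by (simp add: power2_eq_square)
    with that have "\<pi> dvd z ^ 2 - (z ^ 2 - a)" by (metis dvd_diff)
    with a show False by simp
  qed
  have "\<forall>n z. \<exists>z'. \<pi> ^ Suc n dvd z ^ 2 - a \<longrightarrow>
      \<pi> ^ Suc n dvd z' - z \<and> \<pi> ^ Suc (Suc n) dvd z' ^ 2 - a"
    using hensel_sqrt_step unit by (metis dvd_power dvd_trans zero_less_Suc)
  then obtain lift where lift: "\<And>n z. \<pi> ^ Suc n dvd z ^ 2 - a \<Longrightarrow>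
      \<pi> ^ Suc n dvd lift n z - z \<and> \<pi> ^ Suc (Suc n) dvd lift n z ^ 2 - a"
    by metis
  define xs where "xs = rec_nat x lift"
  have approx: "\<pi> ^ Suc n dvd xs n ^ 2 - a" for n
  proof (induction n)
    case (Suc n)
    show ?case using lift[OF Suc.IH] by (simp add: xs_def)
  qed (simp add: xs_def x)
  have "\<pi> ^ n dvd xs (Suc n) - xs n" for n
    using lift[OF approx[of n]] by (simp add: xs_def) (blast intro: dvd_mult_right)
  then obtain y where y: "\<And>n. \<pi> ^ n dvd y - xs n" using complete by blast
  have "\<pi> ^ n dvd y ^ 2 - a" for n
  proof -
    have "y ^ 2 - a = (y - xs n) * (y + xs n) + (xs n ^ 2 - a)"
      by (simp add: algebra_simps power2_eq_square)
    moreover have "\<pi> ^ n dvd xs n ^ 2 - a"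
      using approx[of n] by (simp add: dvd_mult_right)
    moreover have "\<pi> ^ n dvd (y - xs n) * (y + xs n)" using y by simp
    ultimately show ?thesis by (metis dvd_add)
  qed
  then have "y ^ 2 - a = 0" by (rule eq_0_if_dvd_all_powers)
  then show thesis using that by simp
qed

lemma exists_sqrt_minus_one:
  assumes "odd q" "q mod 4 = 1" obtains i :: 'a where "i ^ 2 = -1"
proof -
  obtain x where "\<pi> dvd x ^ 2 + 1" using exists_sqrt_minus_one_mod[OF assms(2)] .
  then have "\<pi> dvd x ^ 2 - (- 1)" by simp
  moreover have "\<not> \<pi> dvd - 1" using uniformizer_not_unit by simp
  ultimately show thesis using sqrt_exists_if_sqrt_mod[OF assms(1)] that by blast
qed

end

section \<open>Subrepresentations\<close>

lemma image_subset_conj_iff: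
  assumes "\<And>v. G (F v) = v" "\<And>v. F (G v) = v"
  shows "f ` G ` A \<subseteq> G ` B \<longleftrightarrow> (F \<circ> f \<circ> G) ` A \<subseteq> B"
proof -
  have "z \<in> G ` B \<longleftrightarrow> F z \<in> B" for z
  proof
    assume "z \<in> G ` B"
    then obtain b where "b \<in> B" "z = G b" by blast
    then show "F z \<in> B" using assms(2) by simp
  next
    assume "F z \<in> B"
    then have "G (F z) \<in> G ` B" by blast
    then show "z \<in> G ` B" using assms(1) by simp
  qed
  then show ?thesis by (auto simp: image_subset_iff)
qed

text \<open>If \<open>i\<^sup>2 = -1\<close>, the base change \<open>T = [[1, -i], [1, i]]\<close> diagonalizes
  \<open>T f\<^sub>2 T\<^sup>-\<^sup>1 = diag(i, -i)\<close>, with \<open>T\<^sup>-\<^sup>1 = (1/2) [[1, 1], [i, -i]]\<close>.\<close>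

lemma kron_f2_diagonalization:
  fixes i h :: "'a::comm_ring_1"
  assumes i: "i * i = -1" and h: "2 * h = 1"
  shows "lin2 h h (h * i) (- (h * i)) (lin2 1 (- i) 1 i v) = v"
    and "lin2 1 (- i) 1 i (lin2 h h (h * i) (- (h * i)) v) = v"
    and "lin2 1 (- i) 1 i (kron_f2 (lin2 h h (h * i) (- (h * i)) v)) = lin2 i 0 0 (- i) v"
proof -
  obtain x y where v: "v = (x, y)" by (rule prod.exhaust)
  have "lin2 h h (h * i) (- (h * i)) (lin2 1 (- i) 1 i (x, y)) = ((2 * h) * x, (2 * h) * (- (i * i)) * y)"
    "lin2 1 (- i) 1 i (lin2 h h (h * i) (- (h * i)) (x, y)) =
      ((2 * h) * x - h * (1 + i * i) * (x - y), (2 * h) * y + h * (1 + i * i) * (x - y))"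
    "lin2 1 (- i) 1 i (kron_f2 (lin2 h h (h * i) (- (h * i)) (x, y))) = ((2 * h) * i * x, - ((2 * h) * i * y))"
    unfolding lin2_def kron_f2_def by (simp_all add: algebra_simps)
  then show "lin2 h h (h * i) (- (h * i)) (lin2 1 (- i) 1 i v) = v"
    and "lin2 1 (- i) 1 i (lin2 h h (h * i) (- (h * i)) v) = v"
    and "lin2 1 (- i) 1 i (kron_f2 (lin2 h h (h * i) (- (h * i)) v)) = lin2 i 0 0 (- i) v"
    using i h by (simp_all add: v lin2_def)
qed

lemma kron_stable_base_change_iff:
  fixes i h :: "'a::comm_ring_1"
  assumes "i * i = -1" "2 * h = 1"
  defines "T' \<equiv> lin2 h h (h * i) (- (h * i))"
  shows "kron_f1 ` T' ` L1 \<subseteq> T' ` L2 \<and> kron_f2 ` T' ` L1 \<subseteq> T' ` L2 \<longleftrightarrow>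
    L1 \<subseteq> L2 \<and> lin2 i 0 0 (- i) ` L1 \<subseteq> L2"
proof -
  define T where "T = lin2 1 (- i) 1 i"
  note base_change = kron_f2_diagonalization[OF assms(1,2), folded T_def T'_def]
  have inverse: "T' (T v) = v" "T (T' v) = v" for v using base_change by blast+
  have "T \<circ> kron_f1 \<circ> T' = id" "T \<circ> kron_f2 \<circ> T' = lin2 i 0 0 (- i)"
    using inverse base_change(3) by (simp_all add: fun_eq_iff kron_f1_def)
  then show ?thesis by (simp only: image_subset_conj_iff[OF inverse] image_id id_apply)
qed

context cdvr
begin

lemma kron_f2_image_hnf_Nil: "kron_f2 ` hnf (m, m, []) \<subseteq> hnf (m, m, [])"
  by (auto simp: kron_f2_def mem_hnf_Nil)

lemma hnf_primitive_vector:
  assumes q: "odd q" "q mod 4 \<noteq> 1" and us: "us \<in> unit_digit_lists"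
  obtains X Y where "(\<pi> ^ min a b * X, \<pi> ^ min a b * Y) \<in> hnf (a, b, us)" "(X ^ 2 + Y ^ 2) dvd 1"
proof -
  let ?m = "min a b"
  \<comment> \<open>One of \<open>X\<close>, \<open>Y\<close> is \<open>1\<close>, and \<open>-1\<close> is not a square modulo \<open>\<pi>\<close>.\<close>
  have "\<exists>X Y. (\<pi> ^ ?m * X, \<pi> ^ ?m * Y) \<in> hnf (a, b, us) \<and> \<not> \<pi> dvd X ^ 2 + Y ^ 2"
  proof (cases "a \<le> b")
    case True
    then have eq: "\<pi> ^ b * expansion us = \<pi> ^ ?m * (\<pi> ^ (b - a) * expansion us)"
      and m: "\<pi> ^ ?m * 1 = \<pi> ^ a"
      by (simp_all add: mult.assoc flip: power_add)
    have "(\<pi> ^ ?m * 1, \<pi> ^ ?m * (\<pi> ^ (b - a) * expansion us)) \<in> hnf (a, b, us)"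
      unfolding m eq[symmetric] by (rule hnf_first_generator)
    moreover have "\<not> \<pi> dvd 1 ^ 2 + (\<pi> ^ (b - a) * expansion us) ^ 2"
      using no_sqrt_minus_one_mod[OF q] by (simp add: add.commute)
    ultimately show ?thesis by blast
  next
    case False
    obtain x where x: "(x, \<pi> ^ b) \<in> hnf (a, b, us)" using hnf_second_generator us by blast
    then obtain r where "x = \<pi> ^ a * r" using hnf_fst_dvd by (metis dvdE)
    with False have "x = \<pi> ^ ?m * (\<pi> ^ (a - b) * r)"
      by (simp add: mult.assoc flip: power_add)
    with x False have "(\<pi> ^ ?m * (\<pi> ^ (a - b) * r), \<pi> ^ ?m * 1) \<in> hnf (a, b, us)" by simp
    moreover have "\<not> \<pi> dvd (\<pi> ^ (a - b) * r) ^ 2 + 1 ^ 2"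
      using no_sqrt_minus_one_mod[OF q] by simp
    ultimately show ?thesis by blast
  qed
  then show thesis using that unit_iff_not_dvd by blast
qed

lemma kron_stable_iff_no_sqrt_minus_one:
  assumes q: "odd q" "q mod 4 \<noteq> 1" and us: "us \<in> unit_digit_lists" and M: "submod2 M"
  shows "kron_f1 ` hnf (a, b, us) \<subseteq> M \<and> kron_f2 ` hnf (a, b, us) \<subseteq> M \<longleftrightarrow>
    hnf (min a b, min a b, []) \<subseteq> M"
proof
  let ?m = "min a b"
  assume sub: "kron_f1 ` hnf (a, b, us) \<subseteq> M \<and> kron_f2 ` hnf (a, b, us) \<subseteq> M"
  obtain X Y where XY: "(\<pi> ^ ?m * X, \<pi> ^ ?m * Y) \<in> hnf (a, b, us)"
    and unit: "(X ^ 2 + Y ^ 2) dvd 1" by (rule hnf_primitive_vector[OF q us])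
  have "kron_f1 (\<pi> ^ ?m * X, \<pi> ^ ?m * Y) \<in> M" "kron_f2 (\<pi> ^ ?m * X, \<pi> ^ ?m * Y) \<in> M"
    using sub XY by blast+
  then have v1: "(\<pi> ^ ?m * X, \<pi> ^ ?m * Y) \<in> M" and v2: "(\<pi> ^ ?m * Y, - (\<pi> ^ ?m * X)) \<in> M"
    by (simp_all add: kron_f1_def kron_f2_def)
  have "(X * (\<pi> ^ ?m * X) + Y * (\<pi> ^ ?m * Y), X * (\<pi> ^ ?m * Y) + Y * - (\<pi> ^ ?m * X)) \<in> M"
    using submod2_add[OF M submod2_smult[OF M v1] submod2_smult[OF M v2]] .
  then have "((X ^ 2 + Y ^ 2) * \<pi> ^ ?m, (X ^ 2 + Y ^ 2) * 0) \<in> M"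
    by (simp add: algebra_simps power2_eq_square)
  then have "(\<pi> ^ ?m, 0) \<in> M" using submod2_unit_smult_iff[OF M unit] by blast
  moreover have "(Y * (\<pi> ^ ?m * X) - X * (\<pi> ^ ?m * Y), Y * (\<pi> ^ ?m * Y) - X * - (\<pi> ^ ?m * X)) \<in> M"
    using submod2_diff[OF M submod2_smult[OF M v1] submod2_smult[OF M v2]] .
  then have "((X ^ 2 + Y ^ 2) * 0, (X ^ 2 + Y ^ 2) * \<pi> ^ ?m) \<in> M"
    by (simp add: algebra_simps power2_eq_square)
  then have "(0, \<pi> ^ ?m) \<in> M" using submod2_unit_smult_iff[OF M unit] by blast
  ultimately show "hnf (?m, ?m, []) \<subseteq> M" using hnf_Nil_subset_iff[OF M] by blast
next
  let ?m = "min a b"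
  assume box: "hnf (?m, ?m, []) \<subseteq> M"
  have sub: "hnf (a, b, us) \<subseteq> hnf (?m, ?m, [])" by (rule hnf_subset_hnf_Nil) simp_all
  then have "kron_f2 ` hnf (a, b, us) \<subseteq> kron_f2 ` hnf (?m, ?m, [])" by (rule image_mono)
  with sub box kron_f2_image_hnf_Nil[of ?m]
  show "kron_f1 ` hnf (a, b, us) \<subseteq> M \<and> kron_f2 ` hnf (a, b, us) \<subseteq> M"
    unfolding kron_f1_def image_ident by (meson order_trans)
qed

lemma diag_stable_iff:
  assumes unit: "(d1 - d2) dvd 1" and us: "us \<in> unit_digit_lists" and M: "submod2 M"
  shows "hnf (a, b, us) \<subseteq> M \<and> lin2 d1 0 0 d2 ` hnf (a, b, us) \<subseteq> M \<longleftrightarrow> hnf (a, b, []) \<subseteq> M"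
proof
  assume sub: "hnf (a, b, us) \<subseteq> M \<and> lin2 d1 0 0 d2 ` hnf (a, b, us) \<subseteq> M"
  have g1: "(\<pi> ^ a, \<pi> ^ b * expansion us) \<in> M"
    and "lin2 d1 0 0 d2 (\<pi> ^ a, \<pi> ^ b * expansion us) \<in> M"
    using hnf_first_generator[of a b us] sub by blast+
  then have "(d1 * \<pi> ^ a, d2 * (\<pi> ^ b * expansion us)) \<in> M" by (simp add: lin2_def)
  from submod2_diff[OF M this submod2_smult[OF M g1, of d2]]
  have "(d1 * \<pi> ^ a - d2 * \<pi> ^ a, d2 * (\<pi> ^ b * expansion us) - d2 * (\<pi> ^ b * expansion us)) \<in> M" .
  then have "((d1 - d2) * \<pi> ^ a, (d1 - d2) * 0) \<in> M" by (simp add: algebra_simps)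
  then have "(\<pi> ^ a, 0) \<in> M" using submod2_unit_smult_iff[OF M unit] by blast
  moreover obtain x where x: "(x, \<pi> ^ b) \<in> hnf (a, b, us)" using hnf_second_generator us by blast
  then have g2: "(x, \<pi> ^ b) \<in> M" and "lin2 d1 0 0 d2 (x, \<pi> ^ b) \<in> M" using sub by blast+
  then have "(d1 * x, d2 * \<pi> ^ b) \<in> M" by (simp add: lin2_def)
  from submod2_diff[OF M submod2_smult[OF M g2, of d1] this]
  have "(d1 * x - d1 * x, d1 * \<pi> ^ b - d2 * \<pi> ^ b) \<in> M" .
  then have "((d1 - d2) * 0, (d1 - d2) * \<pi> ^ b) \<in> M" by (simp add: algebra_simps)
  then have "(0, \<pi> ^ b) \<in> M" using submod2_unit_smult_iff[OF M unit] by blast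
  ultimately show "hnf (a, b, []) \<subseteq> M" using hnf_Nil_subset_iff[OF M] by blast
next
  assume box: "hnf (a, b, []) \<subseteq> M"
  have "lin2 d1 0 0 d2 ` hnf (a, b, []) \<subseteq> hnf (a, b, [])"
    by (auto simp: lin2_def mem_hnf_Nil)
  then show "hnf (a, b, us) \<subseteq> M \<and> lin2 d1 0 0 d2 ` hnf (a, b, us) \<subseteq> M"
    using box hnf_subset_hnf_Nil[OF order_refl order_refl] by blast
qed

definition hnf_pairs_above ::
  "(nat \<times> nat \<times> 'a list \<Rightarrow> nat) \<Rightarrow> (nat \<times> nat \<times> 'a list \<Rightarrow> nat) \<Rightarrow>
     ((nat \<times> nat \<times> 'a list) \<times> (nat \<times> nat \<times> 'a list)) set" where
  "hnf_pairs_above \<sigma> \<tau> =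
     {(x1, x2) \<in> hnf_params \<times> hnf_params. \<sigma> x2 \<le> fst x1 \<and> \<tau> x2 \<le> fst (snd x1)}"

lemma bij_betw_kron_subreps_no_sqrt_minus_one:
  assumes "odd q" "q mod 4 \<noteq> 1"
  shows "bij_betw (map_prod hnf hnf)
    (hnf_pairs_above (\<lambda>(a, b, us). max a b + length us) (\<lambda>(a, b, us). max a b + length us))
    (kron_subreps TYPE('a))"
  unfolding kron_subreps_eq hnf_pairs_above_def
proof (rule bij_betw_restrict_pairs[OF bij_betw_hnf])
  fix x1 x2 assume "x1 \<in> hnf_params" "x2 \<in> hnf_params"
  moreover obtain a1 b1 us1 a2 b2 us2 where "x1 = (a1, b1, us1)" "x2 = (a2, b2, us2)"
    by (metis prod.exhaust)
  ultimately show "kron_f1 ` hnf x1 \<subseteq> hnf x2 \<and> kron_f2 ` hnf x1 \<subseteq> hnf x2 \<longleftrightarrow>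
      (\<lambda>(a, b, us). max a b + length us) x2 \<le> fst x1 \<and>
      (\<lambda>(a, b, us). max a b + length us) x2 \<le> fst (snd x1)"
    using kron_stable_iff_no_sqrt_minus_one[OF assms _ submod2_hnf] hnf_Nil_subset_hnf_iff
    by (auto simp: hnf_params_def)
qed

lemma bij_betw_kron_subreps_sqrt_minus_one:
  assumes "odd q" "q mod 4 = 1"
  obtains F where "bij_betw (map_prod F F)
      (hnf_pairs_above (\<lambda>(a, b, us). a + length us) (\<lambda>(a, b, us). b + length us))
      (kron_subreps TYPE('a))"
    and "\<And>x. index2 (F x) = q ^ hnf_size x"
proof -
  obtain i :: 'a where "i ^ 2 = -1" using exists_sqrt_minus_one[OF assms] .
  then have i: "i * i = -1" by (simp add: power2_eq_square)
  obtain h :: 'a where "1 = 2 * h"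
    using uniformizer_not_dvd_2[OF assms(1)] unit_iff_not_dvd by (metis dvdE)
  then have h: "2 * h = 1" ..
  define T where "T = lin2 1 (- i) 1 i"
  define T' where "T' = lin2 h h (h * i) (- (h * i))"
  have inverse: "T' (T v) = v" "T (T' v) = v" for v
    using kron_f2_diagonalization[OF i h, folded T_def T'_def] by blast+
  have "(i - - i) * (- (h * i)) = - (2 * h) * (i * i)" by (simp add: algebra_simps)
  then have "(i - - i) * (- (h * i)) = 1" using i h by simp
  then have unit: "(i - - i) dvd 1" by (metis dvdI)
  have bij: "bij_betw (image T' \<circ> hnf) hnf_params finite_index_submods"
    using bij_betw_hnf bij_betw_lin2_image_finite_index_submods[OF T'_def T_def inverse(2,1)]
    by (rule bij_betw_trans)
  show thesis
  proof
    show "bij_betw (map_prod (image T' \<circ> hnf) (image T' \<circ> hnf))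
        (hnf_pairs_above (\<lambda>(a, b, us). a + length us) (\<lambda>(a, b, us). b + length us))
        (kron_subreps TYPE('a))"
      unfolding kron_subreps_eq hnf_pairs_above_def
    proof (rule bij_betw_restrict_pairs[OF bij])
      fix x1 x2 assume "x1 \<in> hnf_params" "x2 \<in> hnf_params"
      moreover obtain a1 b1 us1 a2 b2 us2 where x: "x1 = (a1, b1, us1)" "x2 = (a2, b2, us2)"
        by (metis prod.exhaust)
      ultimately have us: "us1 \<in> unit_digit_lists" "us2 \<in> unit_digit_lists"
        by (simp_all add: hnf_params_def)
      show "kron_f1 ` (image T' \<circ> hnf) x1 \<subseteq> (image T' \<circ> hnf) x2 \<and>
          kron_f2 ` (image T' \<circ> hnf) x1 \<subseteq> (image T' \<circ> hnf) x2 \<longleftrightarrow>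
          (\<lambda>(a, b, us). a + length us) x2 \<le> fst x1 \<and> (\<lambda>(a, b, us). b + length us) x2 \<le> fst (snd x1)"
        using kron_stable_base_change_iff[OF i h, folded T'_def, of "hnf x1" "hnf x2"]
          diag_stable_iff[OF unit us(1) submod2_hnf] hnf_Nil_subset_hnf_iff[OF us(2)]
        by (simp add: x)
    qed
    show "index2 ((image T' \<circ> hnf) x) = q ^ hnf_size x" for x
      using index2_lin2_image[OF T'_def inverse(2,1)] index2_hnf by simp
  qed
qed

end

section \<open>The zeta function\<close>

lemma has_sum_mult_product:
  fixes f :: "'x \<Rightarrow> complex" and g :: "'y \<Rightarrow> complex"
  assumes f: "(f has_sum a) A" and g: "(g has_sum b) B"
  shows "((\<lambda>(x, y). f x * g y) has_sum (a * b)) (A \<times> B)"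
proof -
  have sf: "(\<lambda>x. norm (f x)) summable_on A"
    using f summable_on_iff_abs_summable_on_complex has_sum_imp_summable by blast
  have sg: "(\<lambda>y. norm (g y)) summable_on B"
    using g summable_on_iff_abs_summable_on_complex has_sum_imp_summable by blast
  define N where "N = infsum (\<lambda>y. norm (g y)) B"
  have fib: "((\<lambda>y. norm (f x) * norm (g y)) has_sum (norm (f x) * N)) B" for x
    unfolding N_def using has_sum_cmult_right[OF has_sum_infsum[OF sg]] .
  have gs: "(\<lambda>x. norm (f x) * N) summable_on A"
    using summable_on_cmult_left[OF sf] .
  have "(\<lambda>(x, y). norm (f x) * norm (g y)) summable_on Sigma A (\<lambda>_. B)"
    by (rule summable_on_SigmaI[where g = "\<lambda>x. norm (f x) * N"]) (use fib gs in auto)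
  then have "(\<lambda>z. norm ((\<lambda>(x, y). f x * g y) z)) summable_on A \<times> B"
    by (simp add: case_prod_unfold norm_mult)
  then have summ: "(\<lambda>(x, y). f x * g y) summable_on A \<times> B" by (rule abs_summable_summable)
  have fib2: "((\<lambda>y. f x * g y) has_sum (f x * b)) B" for x
    using has_sum_cmult_right[OF g] .
  have g2: "((\<lambda>x. f x * b) has_sum (a * b)) A"
    using has_sum_cmult_left[OF f] .
  show ?thesis
    using has_sum_SigmaI[where f = "\<lambda>(x, y). f x * g y" and g = "\<lambda>x. f x * b", OF _ g2] fib2 summ
    by auto
qed

lemma has_sum_geometric:
  fixes z :: complex assumes "norm z < 1"
  shows "((\<lambda>n. z ^ n) has_sum (1 / (1 - z))) UNIV"
proof (rule norm_summable_imp_has_sum)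
  show "summable (\<lambda>n. norm (z ^ n))" using assms by (simp add: norm_power summable_geometric)
  show "(\<lambda>n. z ^ n) sums (1 / (1 - z))" using geometric_sums[OF assms] by simp
qed

lemma has_sum_comp_card_fibres:
  fixes g :: "'x \<Rightarrow> nat" and h :: "nat \<Rightarrow> complex"
  assumes fin: "\<And>n. finite {x \<in> A. g x = n}"
    and sum: "((\<lambda>n. of_nat (card {x \<in> A. g x = n}) * h n) has_sum S) UNIV"
  shows "((\<lambda>x. h (g x)) has_sum S) A"
proof -
  define B where "B n = {x \<in> A. g x = n}" for n
  have "(\<lambda>n. of_nat (card (B n)) * h n) summable_on UNIV"
    using has_sum_imp_summable[OF sum] unfolding B_def .
  then have norm_summable: "(\<lambda>n. norm (of_nat (card (B n)) * h n)) summable_on UNIV"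
    by (rule summable_on_iff_abs_summable_on_complex[THEN iffD1])
  have norm_fibre: "((\<lambda>x. norm (h n)) has_sum (of_nat (card (B n)) * norm (h n))) (B n)" for n
    using has_sum_finite[OF fin[of n], of "\<lambda>x. norm (h n)"] unfolding B_def by simp
  have "(\<lambda>n. of_nat (card (B n)) * norm (h n)) summable_on UNIV"
    using norm_summable by (simp add: norm_mult)
  then have "(\<lambda>(n, x). norm (h n)) summable_on Sigma UNIV B"
    by (intro summable_on_SigmaI[where g = "\<lambda>n. of_nat (card (B n)) * norm (h n)"]) (use norm_fibre in auto)
  then have "(\<lambda>z. norm ((\<lambda>(n, x). h n) z)) summable_on Sigma UNIV B"
    by (simp add: case_prod_unfold)
  then have summ: "(\<lambda>(n, x). h n) summable_on Sigma UNIV B" by (rule abs_summable_summable)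
  have fibre: "((\<lambda>x. h n) has_sum (of_nat (card (B n)) * h n)) (B n)" for n
    using has_sum_finite[OF fin[of n], of "\<lambda>x. h n"] unfolding B_def by simp
  have "((\<lambda>(n, x). h n) has_sum S) (Sigma UNIV B)"
    using has_sum_SigmaI[where f = "\<lambda>(n, x). h n", OF _ sum[folded B_def] summ] fibre by auto
  moreover have "((\<lambda>(n, x). h n) has_sum S) (Sigma UNIV B) = ((\<lambda>x. h (g x)) has_sum S) A"
    by (rule has_sum_reindex_bij_witness[where i = "\<lambda>x. (g x, x)" and j = snd])
       (auto simp: B_def)
  ultimately show ?thesis by simp
qed

text \<open>On \<open>b = a + k + 1\<close> the exponent is \<open>4a + 3k + 3\<close>.\<close>

lemma has_sum_power_max_upper:
  fixes t :: complex assumes t: "norm t < 1"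
  shows "((\<lambda>(a, b). t ^ (a + b + 2 * max a b)) has_sum
    (t ^ 3 * (1 / (1 - t ^ 4) * (1 / (1 - t ^ 3))))) {(a, b). a < b}"
proof -
  let ?g = "\<lambda>(a, k). t ^ (4 * a + 3 * k + 3)"
  have t34: "norm (t ^ 3) < 1" "norm (t ^ 4) < 1"
    using t by (simp_all add: norm_power power_less_one_iff)
  have "((\<lambda>(a, k). t ^ 3 * ((t ^ 4) ^ a * (t ^ 3) ^ k)) has_sum
      (t ^ 3 * (1 / (1 - t ^ 4) * (1 / (1 - t ^ 3))))) (UNIV \<times> UNIV)"
    using has_sum_cmult_right[OF has_sum_mult_product[OF
        has_sum_geometric[OF t34(2)] has_sum_geometric[OF t34(1)]], of "t ^ 3"]
    by (simp add: case_prod_unfold)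
  moreover have "t ^ 3 * ((t ^ 4) ^ a * (t ^ 3) ^ k) = t ^ (4 * a + 3 * k + 3)" for a k
    by (simp add: power_add mult_ac flip: power_mult)
  ultimately have "(?g has_sum (t ^ 3 * (1 / (1 - t ^ 4) * (1 / (1 - t ^ 3))))) (UNIV \<times> UNIV)"
    by (simp add: case_prod_unfold)
  also have "?this \<longleftrightarrow> ?thesis"
  proof (rule has_sum_reindex_bij_witness[where j = "\<lambda>(a, k). (a, a + k + 1)"
        and i = "\<lambda>(a, b). (a, b - a - 1)"])
    fix x :: "nat \<times> nat" assume "x \<in> UNIV \<times> UNIV"
    obtain a k where x: "x = (a, k)" by fastforce
    have "a + (a + k + 1) + 2 * max a (a + k + 1) = 4 * a + 3 * k + 3" by simp
    then show "(\<lambda>(a, b). t ^ (a + b + 2 * max a b)) ((\<lambda>(a, k). (a, a + k + 1)) x) = ?g x"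
      by (simp only: x prod.case)
  qed auto
  finally show ?thesis .
qed

lemma has_sum_power_max:
  fixes t :: complex assumes t: "norm t < 1"
  shows "((\<lambda>(a, b). t ^ (a + b + 2 * max a b)) has_sum
    ((1 + t ^ 3) / ((1 - t ^ 3) * (1 - t ^ 4)))) (UNIV \<times> UNIV)"
proof -
  let ?f = "\<lambda>(a, b). t ^ (a + b + 2 * max a b)"
  define U where "U = t ^ 3 * (1 / (1 - t ^ 4) * (1 / (1 - t ^ 3)))"
  have t34: "norm (t ^ 3) < 1" "norm (t ^ 4) < 1"
    using t by (simp_all add: norm_power power_less_one_iff)
  have "((\<lambda>n. (t ^ 4) ^ n) has_sum (1 / (1 - t ^ 4))) UNIV"
    by (rule has_sum_geometric[OF t34(2)])
  also have "?this \<longleftrightarrow> (?f has_sum (1 / (1 - t ^ 4))) {(a, b). a = b}"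
    by (rule has_sum_reindex_bij_witness[where i = fst and j = "\<lambda>n. (n, n)"])
       (auto simp flip: power_mult)
  finally have diag: "(?f has_sum (1 / (1 - t ^ 4))) {(a, b). a = b}" .
  have upper: "(?f has_sum U) {(a, b). a < b}"
    unfolding U_def by (rule has_sum_power_max_upper[OF t])
  also have "?this \<longleftrightarrow> (?f has_sum U) {(a, b). b < a}"
    by (rule has_sum_reindex_bij_witness[where i = prod.swap and j = prod.swap])
       (auto simp: ac_simps max.commute)
  finally have "(?f has_sum (1 / (1 - t ^ 4) + U + U))
      ({(a, b). a = b} \<union> {(a, b). a < b} \<union> {(a, b). b < a})"
    using diag upper by (intro has_sum_Un_disjoint) auto
  moreover have "{(a, b). a = b} \<union> {(a, b). a < b} \<union> {(a, b). b < a} = (UNIV :: (nat \<times> nat) set)"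
    by auto
  moreover have "1 / (1 - t ^ 4) + U + U = (1 + t ^ 3) / ((1 - t ^ 3) * (1 - t ^ 4))"
  proof -
    have "1 - t ^ 3 \<noteq> 0" "1 - t ^ 4 \<noteq> 0" using t34 by auto
    moreover have "(1 - t ^ 3) * (1 - t ^ 4) = 1 + t ^ 7 - (t ^ 3 + t ^ 4)"
      by (simp add: algebra_simps flip: power_add)
    ultimately have "1 + t ^ 7 - (t ^ 3 + t ^ 4) \<noteq> 0" by (metis mult_eq_0_iff)
    with \<open>1 - t ^ 3 \<noteq> 0\<close> \<open>1 - t ^ 4 \<noteq> 0\<close> show ?thesis
      unfolding U_def by (simp add: field_simps)
  qed
  ultimately show ?thesis by simp
qed

lemma of_nat_power_powr: "(of_nat (n ^ k) :: complex) powr z = (of_nat n powr z) ^ k"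
proof (induction k)
  case (Suc k)
  have "(of_nat (n ^ Suc k) :: complex) powr z = (of_nat n * of_nat (n ^ k)) powr z" by simp
  also have "\<dots> = of_nat n powr z * of_nat (n ^ k) powr z" by (rule powr_times_real) auto
  finally show ?case using Suc by simp
qed simp

lemma norm_nat_powr_bounds:
  fixes s :: complex
  assumes n: "2 \<le> n" and s: "1 < Re s"
  defines "t \<equiv> of_nat n powr (- s)"
  shows "norm t < 1" "norm (of_nat n * t) < 1" "norm (of_nat n * t ^ 3) < 1"
proof -
  have "norm t = real n powr (- Re s)"
    unfolding t_def by (subst norm_powr_real_powr) auto
  also have "\<dots> < real n powr (-1)"
    using n s by (intro powr_less_mono) auto
  finally have nt: "real n * norm t < 1" using n by (simp add: powr_neg_one field_simps)
  moreover have "1 * norm t \<le> real n * norm t" using n by (intro mult_right_mono) auto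
  ultimately show nt1: "norm t < 1" by simp
  show "norm (of_nat n * t) < 1" using nt by (simp add: norm_mult)
  have "real n * norm t ^ 3 \<le> real n * norm t"
    using nt1 power_decreasing[of 1 3 "norm t"] by (intro mult_left_mono) auto
  then show "norm (of_nat n * t ^ 3) < 1" using nt by (simp add: norm_mult norm_power)
qed

lemma zeta_closed_form_sqrt_minus_one:
  fixes t q :: complex
  assumes "norm t < 1" "norm (q * t) < 1" "norm (q * t ^ 3) < 1"
  shows "1 / (1 - t ^ 2) * (1 / (1 - t ^ 2)) * ((1 - t ^ 3) / (1 - q * t ^ 3)) *
      (1 / (1 - t) * (1 / (1 - t)) * ((1 - t) / (1 - q * t))) =
    (1 + t ^ 2) * (1 - t ^ 3) / ((1 - t) * (1 - t ^ 2) * (1 - t ^ 4) * (1 - q * t) * (1 - q * t ^ 3))"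
proof -
  have t2: "norm (t ^ 2) < 1" using assms(1) by (simp add: norm_power power_less_one_iff)
  then have "1 + t ^ 2 \<noteq> 0"
    by (metis add.inverse_unique norm_minus_cancel norm_one order_less_irrefl)
  with t2 have nz: "1 - t \<noteq> 0" "1 - t ^ 2 \<noteq> 0" "1 + t ^ 2 \<noteq> 0" "1 - q * t \<noteq> 0" "1 - q * t ^ 3 \<noteq> 0"
    using assms by auto
  \<comment> \<open>Abstracting the factors keeps \<open>field_simps\<close> from multiplying out the polynomials.\<close>
  have "1 / b * (1 / b) * (n / e) * (1 / a * (1 / a) * (a / d)) = c * n / (a * b * (b * c) * d * e)"
    if "a \<noteq> 0" "b \<noteq> 0" "c \<noteq> 0" "d \<noteq> 0" "e \<noteq> 0" for a b c d e n :: complex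
    using that by (simp add: field_simps)
  moreover have "1 - t ^ 4 = (1 - t ^ 2) * (1 + t ^ 2)" by (simp add: algebra_simps flip: power_add)
  ultimately show ?thesis using nz by simp
qed

lemma zeta_closed_form_no_sqrt_minus_one:
  fixes t q :: complex
  assumes "norm t < 1" "norm (q * t) < 1" "norm (q * t ^ 3) < 1"
  shows "(1 + t ^ 3) / ((1 - t ^ 3) * (1 - t ^ 4)) * ((1 - t ^ 3) / (1 - q * t ^ 3)) *
      (1 / (1 - t) * (1 / (1 - t)) * ((1 - t) / (1 - q * t))) =
    (1 + t ^ 3) / ((1 - t) * (1 - t ^ 4) * (1 - q * t) * (1 - q * t ^ 3))"
proof -
  have "norm (t ^ 3) < 1" "norm (t ^ 4) < 1"
    using assms(1) by (simp_all add: norm_power power_less_one_iff)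
  then have nz: "1 - t \<noteq> 0" "1 - t ^ 3 \<noteq> 0" "1 - t ^ 4 \<noteq> 0" "1 - q * t \<noteq> 0" "1 - q * t ^ 3 \<noteq> 0"
    using assms by auto
  have "m / (n * f) * (n / e) * (1 / a * (1 / a) * (a / d)) = m / (a * f * d * e)"
    if "a \<noteq> 0" "n \<noteq> 0" "f \<noteq> 0" "d \<noteq> 0" "e \<noteq> 0" for a d e f m n :: complex
    using that by (simp add: field_simps)
  then show ?thesis using nz by simp
qed

context cdvr
begin

lemma has_sum_unit_digit_lists:
  fixes z :: complex
  assumes z: "norm (of_nat q * z) < 1"
  shows "((\<lambda>us. z ^ length us) has_sum ((1 - z) / (1 - of_nat q * z))) unit_digit_lists"
proof (rule has_sum_comp_card_fibres[OF finite_unit_digit_lists])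
  let ?q = "of_nat q :: complex"
  let ?c = "\<lambda>n. of_nat (card {us \<in> unit_digit_lists. length us = n}) * z ^ n"
  have c_Suc: "?c (Suc m) = (?q - 1) * z * (?q * z) ^ m" for m
    using residue_card_ge_2
    by (simp add: card_unit_digit_lists of_nat_diff power_mult_distrib algebra_simps)
  have "((\<lambda>m. (?q - 1) * z * (?q * z) ^ m) has_sum ((?q - 1) * z * (1 / (1 - ?q * z)))) UNIV"
    by (rule has_sum_cmult_right[OF has_sum_geometric[OF z]])
  then have "((\<lambda>m. ?c (Suc m)) has_sum ((?q - 1) * z * (1 / (1 - ?q * z)))) UNIV"
    by (simp only: c_Suc)
  also have "?this \<longleftrightarrow> (?c has_sum ((?q - 1) * z * (1 / (1 - ?q * z)))) {1..}"
    by (rule has_sum_reindex_bij_witness[where j = Suc and i = "\<lambda>n. n - 1"]) auto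
  finally have "(?c has_sum (?c 0 + (?q - 1) * z * (1 / (1 - ?q * z)))) (insert 0 {1..})"
    by (intro has_sum_insert) auto
  moreover have "insert 0 {1..} = (UNIV :: nat set)" by auto
  moreover have "1 - ?q * z \<noteq> 0" using z by auto
  then have "?c 0 + (?q - 1) * z * (1 / (1 - ?q * z)) = (1 - z) / (1 - ?q * z)"
    using card_unit_digit_lists[of 0] by (simp add: field_simps)
  ultimately show "(?c has_sum ((1 - z) / (1 - ?q * z))) UNIV" by simp
qed

lemma has_sum_hnf_params:
  fixes z :: complex
  assumes f: "(f has_sum S) (UNIV \<times> UNIV)" and z: "norm (of_nat q * z) < 1"
  shows "((\<lambda>(a, b, us). f (a, b) * z ^ length us) has_sum
    (S * ((1 - z) / (1 - of_nat q * z)))) hnf_params"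
proof -
  have "((\<lambda>(ab, us). f ab * z ^ length us) has_sum (S * ((1 - z) / (1 - of_nat q * z))))
      ((UNIV \<times> UNIV) \<times> unit_digit_lists)"
    by (rule has_sum_mult_product[OF f has_sum_unit_digit_lists[OF z]])
  also have "?this \<longleftrightarrow> ?thesis"
    by (rule has_sum_reindex_bij_witness[where j = "\<lambda>((a, b), us). (a, b, us)"
          and i = "\<lambda>(a, b, us). ((a, b), us)"]) (auto simp: hnf_params_def)
  finally show ?thesis .
qed

text \<open>Substituting \<open>a\<^sub>1 = \<sigma> x\<^sub>2 + a\<close> and \<open>b\<^sub>1 = \<tau> x\<^sub>2 + b\<close> makes the sum a product.\<close>

lemma has_sum_hnf_pairs_above:
  fixes t :: complex
  assumes S: "((\<lambda>x. t ^ (hnf_size x + \<sigma> x + \<tau> x)) has_sum S) hnf_params"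
    and t: "norm t < 1" "norm (of_nat q * t) < 1"
  shows "((\<lambda>(x1, x2). t ^ (hnf_size x1 + hnf_size x2)) has_sum
    (S * (1 / (1 - t) * (1 / (1 - t)) * ((1 - t) / (1 - of_nat q * t))))) (hnf_pairs_above \<sigma> \<tau>)"
proof -
  let ?I = "1 / (1 - t) * (1 / (1 - t)) * ((1 - t) / (1 - of_nat q * t))"
  have "((\<lambda>(a, b). t ^ a * t ^ b) has_sum (1 / (1 - t) * (1 / (1 - t)))) (UNIV \<times> UNIV)"
    by (rule has_sum_mult_product[OF has_sum_geometric[OF t(1)] has_sum_geometric[OF t(1)]])
  from has_sum_hnf_params[OF this t(2)]
  have "((\<lambda>y. t ^ hnf_size y) has_sum ?I) hnf_params"
    by (rule has_sum_cong[THEN iffD1, rotated]) (auto simp: hnf_params_def power_add)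
  from has_sum_mult_product[OF S this]
  have "((\<lambda>(x2, y). t ^ (hnf_size x2 + \<sigma> x2 + \<tau> x2) * t ^ hnf_size y) has_sum (S * ?I))
      (hnf_params \<times> hnf_params)" .
  also have "?this \<longleftrightarrow> ?thesis"
  proof (rule has_sum_reindex_bij_witness[where j = "\<lambda>(x2, (a, b, us)). ((\<sigma> x2 + a, \<tau> x2 + b, us), x2)"
        and i = "\<lambda>((a, b, us), x2). (x2, (a - \<sigma> x2, b - \<tau> x2, us))"])
    fix z assume "z \<in> hnf_params \<times> hnf_params"
    obtain x2 a b us where z: "z = (x2, (a, b, us))" by (metis prod.exhaust)
    show "(\<lambda>(x1, x2). t ^ (hnf_size x1 + hnf_size x2))
        ((\<lambda>(x2, (a, b, us)). ((\<sigma> x2 + a, \<tau> x2 + b, us), x2)) z) =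
      (\<lambda>(x2, y). t ^ (hnf_size x2 + \<sigma> x2 + \<tau> x2) * t ^ hnf_size y) z"
      by (simp add: z add_ac flip: power_add)
  qed (auto simp: hnf_params_def hnf_pairs_above_def)
  finally show ?thesis .
qed

lemma has_sum_zeta_if_parametrization:
  assumes bij: "bij_betw (map_prod F F) P (kron_subreps TYPE('a))"
    and index: "\<And>x. index2 (F x) = q ^ hnf_size x"
    and sum: "((\<lambda>(x1, x2). t ^ (hnf_size x1 + hnf_size x2)) has_sum Z) P"
    and t: "t = of_nat q powr (- s)"
  shows "((\<lambda>(L1, L2). (of_nat (index2 L1 * index2 L2) :: complex) powr (- s)) has_sum Z)
    (kron_subreps TYPE('a))"
proof -
  let ?w = "\<lambda>(L1, L2). (of_nat (index2 L1 * index2 L2) :: complex) powr (- s)"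
  have "?w (map_prod F F x) = (\<lambda>(x1, x2). t ^ (hnf_size x1 + hnf_size x2)) x" for x
  proof -
    obtain x1 x2 where x: "x = (x1, x2)" by (rule prod.exhaust)
    have "index2 (F x1) * index2 (F x2) = q ^ (hnf_size x1 + hnf_size x2)"
      by (simp add: index power_add)
    then show ?thesis unfolding x t by (simp only: map_prod_simp prod.case of_nat_power_powr)
  qed
  then have "((\<lambda>x. ?w (map_prod F F x)) has_sum Z) P" using sum by simp
  then show ?thesis unfolding has_sum_reindex_bij_betw[OF bij] .
qed

lemma has_sum_zeta_sqrt_minus_one:
  fixes t :: complex
  assumes q: "odd q" "q mod 4 = 1" and t: "t = of_nat q powr (- s)"
    and norm: "norm t < 1" "norm (of_nat q * t) < 1" "norm (of_nat q * t ^ 3) < 1"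
  shows "((\<lambda>(L1, L2). (of_nat (index2 L1 * index2 L2) :: complex) powr (- s)) has_sum
    (1 / (1 - t ^ 2) * (1 / (1 - t ^ 2)) * ((1 - t ^ 3) / (1 - of_nat q * t ^ 3)) *
     (1 / (1 - t) * (1 / (1 - t)) * ((1 - t) / (1 - of_nat q * t))))) (kron_subreps TYPE('a))"
proof -
  obtain F where bij: "bij_betw (map_prod F F)
      (hnf_pairs_above (\<lambda>(a, b, us). a + length us) (\<lambda>(a, b, us). b + length us))
      (kron_subreps TYPE('a))"
    and index: "\<And>x. index2 (F x) = q ^ hnf_size x"
    using bij_betw_kron_subreps_sqrt_minus_one[OF q] by metis
  have "norm (t ^ 2) < 1" using norm(1) by (simp add: norm_power power_less_one_iff)
  then have "((\<lambda>(a, b). (t ^ 2) ^ a * (t ^ 2) ^ b) has_sum (1 / (1 - t ^ 2) * (1 / (1 - t ^ 2))))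
      (UNIV \<times> UNIV)"
    by (intro has_sum_mult_product has_sum_geometric)
  from has_sum_hnf_params[OF this norm(3)]
  have "((\<lambda>x. t ^ (hnf_size x + (\<lambda>(a, b, us). a + length us) x + (\<lambda>(a, b, us). b + length us) x))
      has_sum (1 / (1 - t ^ 2) * (1 / (1 - t ^ 2)) * ((1 - t ^ 3) / (1 - of_nat q * t ^ 3)))) hnf_params"
  proof (rule has_sum_cong[THEN iffD1, rotated])
    fix x :: "nat \<times> nat \<times> 'a list"
    obtain a b us where x: "x = (a, b, us)" by (rule prod_cases3)
    have "hnf_size (a, b, us) + (a + length us) + (b + length us) = 2 * a + 2 * b + 3 * length us"
      by simp
    then show "(\<lambda>(a, b, us). (\<lambda>(a, b). (t ^ 2) ^ a * (t ^ 2) ^ b) (a, b) * (t ^ 3) ^ length us) x =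
      t ^ (hnf_size x + (\<lambda>(a, b, us). a + length us) x + (\<lambda>(a, b, us). b + length us) x)"
      by (simp only: x prod.case power_add power_mult)
  qed
  from has_sum_hnf_pairs_above[OF this norm(1,2)]
  show ?thesis by (rule has_sum_zeta_if_parametrization[OF bij index _ t])
qed

lemma has_sum_zeta_no_sqrt_minus_one:
  fixes t :: complex
  assumes q: "odd q" "q mod 4 \<noteq> 1" and t: "t = of_nat q powr (- s)"
    and norm: "norm t < 1" "norm (of_nat q * t) < 1" "norm (of_nat q * t ^ 3) < 1"
  shows "((\<lambda>(L1, L2). (of_nat (index2 L1 * index2 L2) :: complex) powr (- s)) has_sum
    ((1 + t ^ 3) / ((1 - t ^ 3) * (1 - t ^ 4)) * ((1 - t ^ 3) / (1 - of_nat q * t ^ 3)) *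
     (1 / (1 - t) * (1 / (1 - t)) * ((1 - t) / (1 - of_nat q * t))))) (kron_subreps TYPE('a))"
proof -
  note bij = bij_betw_kron_subreps_no_sqrt_minus_one[OF q]
  from has_sum_hnf_params[OF has_sum_power_max[OF norm(1)] norm(3)]
  have "((\<lambda>x. t ^ (hnf_size x + (\<lambda>(a, b, us). max a b + length us) x +
      (\<lambda>(a, b, us). max a b + length us) x)) has_sum
      ((1 + t ^ 3) / ((1 - t ^ 3) * (1 - t ^ 4)) * ((1 - t ^ 3) / (1 - of_nat q * t ^ 3)))) hnf_params"
  proof (rule has_sum_cong[THEN iffD1, rotated])
    fix x :: "nat \<times> nat \<times> 'a list"
    obtain a b us where x: "x = (a, b, us)" by (rule prod_cases3)
    have "hnf_size (a, b, us) + (max a b + length us) + (max a b + length us) =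
        (a + b + 2 * max a b) + 3 * length us"
      by simp
    then show "(\<lambda>(a, b, us). (\<lambda>(a, b). t ^ (a + b + 2 * max a b)) (a, b) * (t ^ 3) ^ length us) x =
      t ^ (hnf_size x + (\<lambda>(a, b, us). max a b + length us) x + (\<lambda>(a, b, us). max a b + length us) x)"
      by (simp only: x prod.case power_add power_mult)
  qed
  from has_sum_hnf_pairs_above[OF this norm(1,2)]
  show ?thesis by (rule has_sum_zeta_if_parametrization[OF bij index2_hnf _ t])
qed

theorem has_sum_kron_zeta:
  assumes "odd q" and "Re s > 1"
  defines "t \<equiv> (of_nat q :: complex) powr (- s)"
  shows "((\<lambda>(L1, L2). (of_nat (index2 L1 * index2 L2) :: complex) powr (- s))
           has_sum
           (if q mod 4 = 1
            then (1 + t^2) * (1 - t^3) /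
                 ((1 - t) * (1 - t^2) * (1 - t^4) * (1 - of_nat q * t) * (1 - of_nat q * t^3))
            else (1 + t^3) /
                 ((1 - t) * (1 - t^4) * (1 - of_nat q * t) * (1 - of_nat q * t^3))))
         (kron_subreps TYPE('a))"
proof -
  note norm = norm_nat_powr_bounds[OF residue_card_ge_2 assms(2), folded t_def]
  show ?thesis
    using has_sum_zeta_sqrt_minus_one[OF assms(1) _ t_def[THEN meta_eq_to_obj_eq] norm]
      has_sum_zeta_no_sqrt_minus_one[OF assms(1) _ t_def[THEN meta_eq_to_obj_eq] norm]
      zeta_closed_form_sqrt_minus_one[OF norm] zeta_closed_form_no_sqrt_minus_one[OF norm]
    by auto
qed

end

theorem proposition3p13:
  fixes s :: complex and q :: nat
  assumes "compact_dvr TYPE('a::idom)"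
    and "residue_card TYPE('a) = q"
    and "odd q"
    and "Re s > 1"
  defines "t \<equiv> (of_nat q :: complex) powr (- s)"
  shows "((\<lambda>(L1, L2). (of_nat (index2 L1 * index2 L2) :: complex) powr (- s))
           has_sum
           (if q mod 4 = 1
            then (1 + t^2) * (1 - t^3) /
                 ((1 - t) * (1 - t^2) * (1 - t^4) * (1 - of_nat q * t) * (1 - of_nat q * t^3))
            else (1 + t^3) /
                 ((1 - t) * (1 - t^4) * (1 - of_nat q * t) * (1 - of_nat q * t^3))))
         (kron_subreps TYPE('a))"
proof -
  obtain \<pi> :: 'a where "cdvr \<pi> q"
    using assms(1,2) unfolding compact_dvr_def cdvr_def by blast
  then show ?thesis
    unfolding t_def using cdvr.has_sum_kron_zeta assms(3,4) by blast
qed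

end
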